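(* For every integer $d\ge 1$ there exists a constant $C_d>0$ such that for all $n\ge 1$ and all $A=\sum_{\mathbf{s}\in\{0,1,2,3\}^n,\ |\mathbf{s}|\le d}\widehat{A}_{\mathbf{s}}\,\sigma_{\mathbf{s}}\in M_2(\mathbb{C})^{\otimes n}$ of degree at most $d$, \[ \Big(\sum_{|\mathbf{s}|\le d}|\widehat{A}_{\mathbf{s}}|^{\frac{2d}{d+1}}\Big)^{\frac{d+1}{2d}}\le C_d\,\|A\|, \] where $\|A\|$ is the operator norm. Moreover, one can take $C_d\le 3^d\,\mathrm{BH}^{\le d}_{\{\pm1\}}$.
   Context: Pauli matrices: $\sigma_0=I_2$, $\sigma_1=\begin{pmatrix}0&1\\1&0\end{pmatrix}$, $\sigma_2=\begin{pmatrix}0&-i\\ i&0\end{pmatrix}$, $\sigma_3=\begin{pmatrix}1&0\\0&-1\end{pmatrix}$. For $\mathbf{s}=(s_1,\dots,s_n)\in\{0,1,2,3\}^n$, $\sigma_{\mathbf{s}}=\sigma_{s_1}\otimes\cdots\otimes\sigma_{s_n}$; these form a basis of $M_2(\mathbb{C})^{\otimes n}$, so every $A$ has a unique expansion $A=\sum_{\mathbf{s}}\widehat{A}_{\mathbf{s}}\sigma_{\mathbf{s}}$. $|\mathbf{s}|$ denotes the number of nonzero entries of $\mathbf{s}$; $A$ is of degree $d$ if $\widehat{A}_{\mathbf{s}}=0$ whenever $|\mathbf{s}|>d$. For a function $f:\{-1,1\}^m\to\mathbb{C}$ write $f=\sum_{S\subset[m]}\widehat f(S)\chi_S$ with $\chi_S(x)=\prod_{j\in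 S}x_j$; $f$ has degree $d$ if $\widehat f(S)=0$ for $|S|>d$. $\mathrm{BH}^{\le d}_{\{\pm1\}}$ denotes the best constant $C$ such that for all $m\ge1$ and all $f:\{-1,1\}^m\to\mathbb{C}$ of degree $d$, $\big(\sum_{|S|\le d}|\widehat f(S)|^{\frac{2d}{d+1}}\big)^{\frac{d+1}{2d}}\le C\|f\|_\infty$ (this constant is known to be finite, indeed at most $C^{\sqrt{d\log d}}$ for an absolute $C$, by Defant–Mastyło–Pérez). *)

theory Defs
  imports "HOL-Analysis.Analysis"
begin

text \<open>Computational basis of (C^2)^{tensor n}: bool lists of length n (False = e_0, True = e_1).
  Matrices in M_2(C)^{tensor n} are functions row \<Rightarrow> col \<Rightarrow> complex on this index set.\<close>

definition cube :: "nat \<Rightarrow> bool list set" where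
  "cube n = {xs. length xs = n}"

definition pwords :: "nat \<Rightarrow> nat list set" where
  "pwords n = {s. length s = n \<and> set s \<subseteq> {0,1,2,3}}"

definition pweight :: "nat list \<Rightarrow> nat" where
  "pweight s = card {i. i < length s \<and> s ! i \<noteq> 0}"

definition pauli :: "nat \<Rightarrow> bool \<Rightarrow> bool \<Rightarrow> complex" where
  "pauli k r c =
     (if k = 0 then (if r = c then 1 else 0)
      else if k = 1 then (if r = c then 0 else 1)
      else if k = 2 then (if r = c then 0 else if r then \<i> else - \<i>)
      else (if r = c then (if r then -1 else 1) else 0))"

definition pauli_tensor :: "nat list \<Rightarrow> bool list \<Rightarrow> bool list \<Rightarrow> complex" where
  "pauli_tensor s r c = (\<Prod>i<length s. pauli (s ! i) (r ! i) (c ! i))"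

definition op_norm :: "nat \<Rightarrow> (bool list \<Rightarrow> bool list \<Rightarrow> complex) \<Rightarrow> real" where
  "op_norm n A = Sup {sqrt (\<Sum>y\<in>cube n. (cmod (\<Sum>x\<in>cube n. A y x * v x))\<^sup>2) | v.
                        (\<Sum>x\<in>cube n. (cmod (v x))\<^sup>2) = 1}"

text \<open>Boolean cube {-1,1}^m as bool lists of length m (True = 1, False = -1); characters chi_S.\<close>
definition chi :: "nat set \<Rightarrow> bool list \<Rightarrow> complex" where
  "chi S x = (\<Prod>j\<in>S. if x ! j then 1 else -1)"

text \<open>A function f of degree d on {-1,1}^m is given by its Fourier coefficients g (supported on
  subsets of {0..<m} of size at most d), f = sum_S g S chi_S.\<close>
definition BH_consts :: "nat \<Rightarrow> real set" where
  "BH_consts d = {C. C \<ge> 0 \<and> (\<forall>(m::nat) (g :: nat set \<Rightarrow> complex). m \<ge> 1 \<longrightarrow>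
      (\<forall>S. card S > d \<longrightarrow> g S = 0) \<longrightarrow>
      (\<Sum>S\<in>{S. S \<subseteq> {0..<m} \<and> card S \<le> d}. cmod (g S) powr (2 * real d / (real d + 1)))
          powr ((real d + 1) / (2 * real d))
      \<le> C * Max ((\<lambda>x. cmod (\<Sum>S\<in>Pow {0..<m}. g S * chi S x)) ` cube m))}"

definition BH :: "nat \<Rightarrow> real" where
  "BH d = Inf (BH_consts d)"

end

theory Submission
  imports Defs "HOL-Computational_Algebra.Polynomial"
begin

text \<open>
  Fix \<open>x \<in> {-1, 1}\<^sup>3\<^sup>n\<close> and a choice of axes \<open>\<kappa> \<in> {1, 2, 3}\<^sup>n\<close>, and let \<open>\<psi>\<close> be the product state
  whose \<open>j\<close>-th factor is the eigenvector of \<open>\<sigma>\<^bsub>\<kappa>\<^sub>j\<^esub>\<close> with eigenvalue \<open>x\<^bsub>3j+\<kappa>\<^sub>j\<^esub>\<close>.  Then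
  \<open>\<langle>\<psi>, \<sigma>\<^sub>s \<psi>\<rangle>\<close> vanishes unless \<open>s\<^sub>j \<in> {0, \<kappa>\<^sub>j}\<close> for every \<open>j\<close>, and averaging over \<open>\<kappa>\<close> gives
  \<open>3\<^bsup>-|s|\<^esup> \<chi>\<^bsub>T(s)\<^esub>(x)\<close> with \<open>T(s) = {3j + s\<^sub>j : s\<^sub>j \<noteq> 0}\<close>.  Hence the function
  \<open>f = \<Sum>\<^sub>s 3\<^bsup>-|s|\<^esup> c\<^sub>s \<chi>\<^bsub>T(s)\<^esub>\<close> is an average of quadratic forms \<open>\<langle>\<psi>, A \<psi>\<rangle>\<close> at unit vectors,
  so \<open>\<parallel>f\<parallel>\<^sub>\<infinity> \<le> \<parallel>A\<parallel>\<close>, and the Boolean Bohnenblust--Hille inequality for \<open>f\<close> loses at most \<open>3\<^sup>d\<close>.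

  That \<open>BH d\<close> is itself an admissible constant requires the Boolean inequality with some finite
  constant.  Homogeneous parts and the sums \<open>\<Sum>\<^sub>t |\<partial>\<^sub>t f(x)|\<close> are bounded by \<open>\<parallel>f\<parallel>\<^sub>\<infinity>\<close> via
  interpolation along lines and a polarization; Bonami's hypercontractivity gives Khintchine's
  inequality for the derivatives, and Blei's mixed-norm inequality turns the resulting
  \<open>\<ell>\<^sup>1(\<ell>\<^sup>2)\<close> bounds into the \<open>2d/(d+1)\<close>-norm of the coefficients.
\<close>

lemma sum_prod_lists:
  assumes "finite V"
  shows "(\<Sum>xs | length xs = n \<and> set xs \<subseteq> V. \<Prod>j<n. h j (xs ! j))
       = (\<Prod>j<n. \<Sum>v\<in>V. (h j v :: 'b::comm_semiring_1))"
proof (induction n arbitrary: h)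
  case 0
  have "{xs. length xs = 0 \<and> set xs \<subseteq> V} = {[]}" by auto
  then show ?case by simp
next
  case (Suc n)
  let ?L = "{ys. set ys \<subseteq> V \<and> length ys = n}"
  have inj: "inj_on (\<lambda>(ys, v). v # ys) (?L \<times> V)" by (auto simp: inj_on_def)
  have "(\<Sum>xs | length xs = Suc n \<and> set xs \<subseteq> V. \<Prod>j<Suc n. h j (xs ! j))
      = (\<Sum>p\<in>?L \<times> V. \<Prod>j<Suc n. h j ((snd p # fst p) ! j))"
    unfolding conj_commute[of "length _ = _"] lists_length_Suc_eq
    by (subst sum.reindex[OF inj]) (simp add: case_prod_beta)
  also have "\<dots> = (\<Sum>ys\<in>?L. \<Sum>v\<in>V. h 0 v * (\<Prod>j<n. h (Suc j) (ys ! j)))"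
    unfolding prod.lessThan_Suc_shift by (simp add: sum.cartesian_product case_prod_beta)
  also have "\<dots> = (\<Sum>v\<in>V. h 0 v) * (\<Sum>ys\<in>?L. \<Prod>j<n. h (Suc j) (ys ! j))"
    by (simp add: sum_product sum.swap[of _ ?L])
  also have "\<dots> = (\<Prod>j<Suc n. \<Sum>v\<in>V. h j v)"
    using Suc[of "\<lambda>j. h (Suc j)"] unfolding prod.lessThan_Suc_shift by (simp add: conj_commute)
  finally show ?case .
qed

lemma finite_cube [simp]: "finite (cube n)"
  using finite_lists_length_eq[of "UNIV :: bool set" n] by (simp add: cube_def)

lemma card_cube: "card (cube n) = 2 ^ n"
  using card_lists_length_eq[of "UNIV :: bool set" n] by (simp add: cube_def card_UNIV_bool)

lemma cube_nonempty: "cube n \<noteq> {}"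
  by (auto simp: cube_def intro!: exI[of _ "replicate n True"])

lemma sum_prod_cube:
  "(\<Sum>xs\<in>cube n. \<Prod>j<n. h j (xs ! j)) = (\<Prod>j<n. h j True + (h j False :: 'b::comm_semiring_1))"
proof -
  have "(\<Sum>xs\<in>cube n. \<Prod>j<n. h j (xs ! j)) = (\<Prod>j<n. \<Sum>v\<in>UNIV. h j v)"
    using sum_prod_lists[where V = UNIV and n = n and h = h] by (simp add: cube_def)
  then show ?thesis by (simp add: UNIV_bool add.commute)
qed

lemma sum_cube_Suc:
  "(\<Sum>x\<in>cube (Suc n). F x) = (\<Sum>x\<in>cube n. F (x @ [True]) + F (x @ [False]))"
proof -
  have "cube (Suc n) = (\<lambda>(x, b). x @ [b]) ` (cube n \<times> UNIV)"
    by (auto simp: cube_def image_iff length_Suc_conv_rev)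
  moreover have "inj_on (\<lambda>(x, b). x @ [b]) (cube n \<times> (UNIV :: bool set))"
    by (auto simp: inj_on_def)
  ultimately have "(\<Sum>x\<in>cube (Suc n). F x) = (\<Sum>(x, b)\<in>cube n \<times> UNIV. F (x @ [b]))"
    by (simp add: sum.reindex case_prod_unfold)
  also have "\<dots> = (\<Sum>x\<in>cube n. \<Sum>b\<in>UNIV. F (x @ [b]))"
    by (rule sum.cartesian_product[symmetric])
  finally show ?thesis by (simp add: UNIV_bool add.commute)
qed

lemma sum_Pow_lessThan_Suc:
  "(\<Sum>S\<in>Pow {0..<Suc n}. F S) = (\<Sum>S\<in>Pow {0..<n}. F S) + (\<Sum>S\<in>Pow {0..<n}. F (insert n S))"
proof -
  have "inj_on (insert n) (Pow {0..<n})"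
    by (rule inj_onI) (metis Diff_insert_absorb PowD atLeastLessThan_iff less_irrefl subsetD)
  moreover have "Pow {0..<n} \<inter> insert n ` Pow {0..<n} = {}" by auto
  ultimately show ?thesis
    by (simp add: atLeast0_lessThan_Suc Pow_insert sum.union_disjoint sum.reindex)
qed

section \<open>Fourier expansions on the Boolean cube\<close>

definition bool_sign :: "bool \<Rightarrow> real" where
  "bool_sign b = (if b then 1 else -1)"

definition fourier_sum :: "(nat set \<Rightarrow> complex) \<Rightarrow> nat \<Rightarrow> bool list \<Rightarrow> complex" where
  "fourier_sum a m x = (\<Sum>S\<in>Pow {0..<m}. a S * chi S x)"

definition sup_norm :: "(nat set \<Rightarrow> complex) \<Rightarrow> nat \<Rightarrow> real" where
  "sup_norm a m = Max ((\<lambda>x. cmod (fourier_sum a m x)) ` cube m)"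

definition degree_le :: "(nat set \<Rightarrow> complex) \<Rightarrow> nat \<Rightarrow> nat \<Rightarrow> bool" where
  "degree_le a m k \<longleftrightarrow> (\<forall>S\<subseteq>{0..<m}. k < card S \<longrightarrow> a S = 0)"

definition homogeneous :: "(nat set \<Rightarrow> complex) \<Rightarrow> nat \<Rightarrow> nat \<Rightarrow> bool" where
  "homogeneous a m k \<longleftrightarrow> (\<forall>S\<subseteq>{0..<m}. card S \<noteq> k \<longrightarrow> a S = 0)"

lemma abs_bool_sign [simp]: "\<bar>bool_sign b\<bar> = 1"
  by (simp add: bool_sign_def)

lemma chi_eq_prod_bool_sign: "chi S x = (\<Prod>j\<in>S. complex_of_real (bool_sign (x ! j)))"
  unfolding chi_def bool_sign_def by (intro prod.cong) auto

lemma norm_fourier_sum_le_sup_norm: "x \<in> cube m \<Longrightarrow> cmod (fourier_sum a m x) \<le> sup_norm a m"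
  unfolding sup_norm_def by (intro Max_ge) auto

lemma sup_norm_nonneg: "0 \<le> sup_norm a m"
  using cube_nonempty norm_fourier_sum_le_sup_norm by (meson ex_in_conv norm_ge_zero order_trans)

lemma sup_norm_le: "(\<And>x. x \<in> cube m \<Longrightarrow> cmod (fourier_sum a m x) \<le> B) \<Longrightarrow> sup_norm a m \<le> B"
  unfolding sup_norm_def using cube_nonempty by (subst Max_le_iff) auto

lemma homogeneous_imp_degree_le: "homogeneous a m k \<Longrightarrow> degree_le a m k"
  unfolding homogeneous_def degree_le_def by auto

lemma degree_le_Suc_lower: "degree_le a (Suc m) k \<Longrightarrow> degree_le a m k"
proof -
  have "{0..<m} \<subseteq> {0..<Suc m}" by auto
  then show "degree_le a (Suc m) k \<Longrightarrow> degree_le a m k"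
    unfolding degree_le_def by (meson order_trans)
qed

lemma degree_le_Suc_upper:
  assumes "degree_le a (Suc m) (Suc k)"
  shows "degree_le (\<lambda>S. a (insert m S)) m k"
  unfolding degree_le_def
proof (intro allI impI)
  fix S assume S: "S \<subseteq> {0..<m}" "k < card S"
  then have "card (insert m S) = Suc (card S)"
    by (subst card_insert_disjoint) (auto intro: finite_subset)
  with S have "insert m S \<subseteq> {0..<Suc m}" "Suc k < card (insert m S)" by auto
  with assms show "a (insert m S) = 0" unfolding degree_le_def by blast
qed

lemma degree_le_0_upper:
  assumes "degree_le a (Suc m) 0" "S \<subseteq> {0..<m}"
  shows "a (insert m S) = 0"
proof -
  have "insert m S \<subseteq> {0..<Suc m}" "0 < card (insert m S)"
    using assms(2) finite_subset[OF assms(2)] by (auto simp: card_gt_0_iff)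
  then show ?thesis using assms(1) unfolding degree_le_def by blast
qed

lemma fourier_sum_snoc:
  assumes "x \<in> cube m"
  shows "fourier_sum a (Suc m) (x @ [b])
       = fourier_sum a m x + complex_of_real (bool_sign b) * fourier_sum (\<lambda>S. a (insert m S)) m x"
proof -
  have len: "length x = m" using assms by (simp add: cube_def)
  have chi_low: "chi S (x @ [b]) = chi S x" if "S \<subseteq> {0..<m}" for S
    unfolding chi_def using that len by (intro prod.cong) (auto simp: nth_append)
  have chi_high: "chi (insert m S) (x @ [b]) = complex_of_real (bool_sign b) * chi S x"
    if "S \<subseteq> {0..<m}" for S
  proof -
    have "m \<notin> S" "finite S" using that finite_subset by auto
    then have "chi (insert m S) (x @ [b]) = (if b then 1 else -1) * chi S (x @ [b])"
      unfolding chi_def using len by (simp add: nth_append)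
    then show ?thesis using chi_low[OF that] by (simp add: bool_sign_def)
  qed
  show ?thesis
    unfolding fourier_sum_def sum_Pow_lessThan_Suc using chi_low chi_high
    by (simp add: sum_distrib_left algebra_simps)
qed

lemma sum_cube_Suc_fourier_sum:
  "(\<Sum>x\<in>cube (Suc m). F (fourier_sum a (Suc m) x))
   = (\<Sum>x\<in>cube m. F (fourier_sum a m x + fourier_sum (\<lambda>S. a (insert m S)) m x)
                  + F (fourier_sum a m x - fourier_sum (\<lambda>S. a (insert m S)) m x))"
  unfolding sum_cube_Suc by (intro sum.cong) (auto simp: fourier_sum_snoc bool_sign_def)

lemma parallelogram_cmod:
  "(cmod (h + e))\<^sup>2 + (cmod (h - e))\<^sup>2 = 2 * (cmod h)\<^sup>2 + 2 * (cmod e)\<^sup>2"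
  unfolding cmod_power2 by (simp add: power2_eq_square algebra_simps)

lemma sum_cube_Suc_norm_sq_fourier_sum:
  "(\<Sum>x\<in>cube (Suc m). (cmod (fourier_sum a (Suc m) x))\<^sup>2)
   = 2 * (\<Sum>x\<in>cube m. (cmod (fourier_sum a m x))\<^sup>2)
     + 2 * (\<Sum>x\<in>cube m. (cmod (fourier_sum (\<lambda>S. a (insert m S)) m x))\<^sup>2)"
  unfolding sum_cube_Suc_fourier_sum[where F = "\<lambda>z. (cmod z)\<^sup>2"] parallelogram_cmod
  by (simp add: sum.distrib sum_distrib_left)

lemma parseval:
  "(\<Sum>x\<in>cube m. (cmod (fourier_sum a m x))\<^sup>2) = 2 ^ m * (\<Sum>S\<in>Pow {0..<m}. (cmod (a S))\<^sup>2)"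
proof (induction m arbitrary: a)
  case 0
  have "cube 0 = {[]}" by (auto simp: cube_def)
  then show ?case by (simp add: fourier_sum_def chi_def)
next
  case (Suc m)
  show ?case
    unfolding sum_cube_Suc_norm_sq_fourier_sum sum_Pow_lessThan_Suc Suc.IH by (simp add: algebra_simps)
qed

lemma parallelogram_pow4_le:
  "(cmod (h + e)) ^ 4 + (cmod (h - e)) ^ 4
   \<le> 2 * ((cmod h) ^ 4 + 6 * (cmod h)\<^sup>2 * (cmod e)\<^sup>2 + (cmod e) ^ 4)"
proof -
  have pow4: "(cmod z) ^ 4 = ((Re z)\<^sup>2 + (Im z)\<^sup>2)\<^sup>2" for z
  proof -
    have "(cmod z) ^ 4 = ((cmod z)\<^sup>2)\<^sup>2" by (simp flip: power_mult)
    then show ?thesis by (simp add: cmod_power2)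
  qed
  obtain a b c d where "h = Complex a b" "e = Complex c d" by (meson complex.exhaust_sel)
  then have "2 * ((cmod h) ^ 4 + 6 * (cmod h)\<^sup>2 * (cmod e)\<^sup>2 + (cmod e) ^ 4)
      - ((cmod (h + e)) ^ 4 + (cmod (h - e)) ^ 4) = 8 * (a * d - b * c)\<^sup>2"
    unfolding pow4 cmod_power2 by (simp add: power2_eq_square algebra_simps)
  then show ?thesis by (smt (verit) zero_le_power2)
qed

lemma sum_cube_Suc_pow4_fourier_sum_le:
  fixes a :: "nat set \<Rightarrow> complex" and m :: nat
  defines "h \<equiv> fourier_sum a m" and "e \<equiv> fourier_sum (\<lambda>S. a (insert m S)) m"
  shows "(\<Sum>x\<in>cube (Suc m). (cmod (fourier_sum a (Suc m) x)) ^ 4)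
       \<le> 2 * ((\<Sum>x\<in>cube m. (cmod (h x)) ^ 4) + 6 * (\<Sum>x\<in>cube m. (cmod (h x))\<^sup>2 * (cmod (e x))\<^sup>2)
              + (\<Sum>x\<in>cube m. (cmod (e x)) ^ 4))"
proof -
  have "(\<Sum>x\<in>cube (Suc m). (cmod (fourier_sum a (Suc m) x)) ^ 4)
      \<le> (\<Sum>x\<in>cube m. 2 * ((cmod (h x)) ^ 4 + 6 * (cmod (h x))\<^sup>2 * (cmod (e x))\<^sup>2 + (cmod (e x)) ^ 4))"
    unfolding sum_cube_Suc_fourier_sum[where F = "\<lambda>z. (cmod z) ^ 4"] h_def e_def
    by (intro sum_mono parallelogram_pow4_le)
  then show ?thesis by (simp add: sum.distrib sum_distrib_left mult.assoc)
qed

text \<open>The induction step of Bonami's inequality, with \<open>X, Y, Z\<close> the sums of \<open>|h|^4, |e|^4, |h|^2 |e|^2\<close>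
  and \<open>H, E\<close> those of \<open>|h|^2, |e|^2\<close>; the factor \<open>1/9\<close> pays for the cross term \<open>6 Z\<close>.\<close>
lemma bonami_step_inequality:
  fixes N X Y Z H E c :: real
  assumes "N > 0" "X \<ge> 0" "Y \<ge> 0" "H \<ge> 0" "E \<ge> 0" "c \<ge> 0"
    and "Z\<^sup>2 \<le> X * Y" "N * X \<le> c * H\<^sup>2" "N * Y \<le> c / 9 * E\<^sup>2"
  shows "N * (X + 6 * Z + Y) \<le> c * (H + E)\<^sup>2"
proof -
  have "(N * Z)\<^sup>2 = (N * N) * Z\<^sup>2" by (simp add: power2_eq_square)
  also have "\<dots> \<le> (N * N) * (X * Y)" using assms(1,7) by (intro mult_left_mono) auto
  also have "\<dots> = (N * X) * (N * Y)" by simp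
  also have "\<dots> \<le> (c * H\<^sup>2) * (c / 9 * E\<^sup>2)"
    by (rule mult_mono[OF assms(8,9)]) (use assms in auto)
  also have "\<dots> = (c * H * E / 3)\<^sup>2" by (simp add: power2_eq_square)
  finally have "N * Z \<le> c * H * E / 3"
    by (rule power2_le_imp_le) (use assms in simp)
  moreover have "c / 9 * E\<^sup>2 \<le> c * E\<^sup>2" using assms(6) by (intro mult_right_mono) auto
  moreover have "c * (H + E)\<^sup>2 = c * H\<^sup>2 + 2 * (c * H * E) + c * E\<^sup>2"
    by (simp add: power2_eq_square algebra_simps)
  moreover have "N * (X + 6 * Z + Y) = N * X + 6 * (N * Z) + N * Y"
    by (simp add: algebra_simps)
  ultimately show ?thesis using assms(8,9) by linarith
qed

lemma bonami_inequality_Suc: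
  assumes IH: "\<And>a k. degree_le a m k \<Longrightarrow> 2 ^ m * (\<Sum>x\<in>cube m. (cmod (fourier_sum a m x)) ^ 4)
      \<le> 9 ^ k * (\<Sum>x\<in>cube m. (cmod (fourier_sum a m x))\<^sup>2)\<^sup>2"
    and a: "degree_le a (Suc m) k"
  shows "2 ^ Suc m * (\<Sum>x\<in>cube (Suc m). (cmod (fourier_sum a (Suc m) x)) ^ 4)
       \<le> 9 ^ k * (\<Sum>x\<in>cube (Suc m). (cmod (fourier_sum a (Suc m) x))\<^sup>2)\<^sup>2"
proof -
  define h where "h = fourier_sum a m"
  define e where "e = fourier_sum (\<lambda>S. a (insert m S)) m"
  define X where "X = (\<Sum>x\<in>cube m. (cmod (h x)) ^ 4)"
  define Y where "Y = (\<Sum>x\<in>cube m. (cmod (e x)) ^ 4)"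
  define Z where "Z = (\<Sum>x\<in>cube m. (cmod (h x))\<^sup>2 * (cmod (e x))\<^sup>2)"
  define H where "H = (\<Sum>x\<in>cube m. (cmod (h x))\<^sup>2)"
  define E where "E = (\<Sum>x\<in>cube m. (cmod (e x))\<^sup>2)"
  have IH_lower: "2 ^ m * X \<le> 9 ^ k * H\<^sup>2"
    using IH[OF degree_le_Suc_lower[OF a]] by (simp add: X_def H_def h_def)
  have IH_upper: "2 ^ m * Y \<le> 9 ^ k / 9 * E\<^sup>2"
  proof (cases k)
    case 0
    then have "e = (\<lambda>x. 0)"
      using degree_le_0_upper[OF a[unfolded 0]] by (auto simp: e_def fourier_sum_def)
    then show ?thesis by (simp add: Y_def E_def)
  next
    case (Suc k')
    then show ?thesis using IH[OF degree_le_Suc_upper] a by (simp add: Y_def E_def e_def)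
  qed
  have "Z\<^sup>2 \<le> X * Y"
    using Cauchy_Schwarz_ineq_sum[of "\<lambda>x. (cmod (h x))\<^sup>2" "\<lambda>x. (cmod (e x))\<^sup>2" "cube m"]
    by (simp add: X_def Y_def Z_def flip: power_mult)
  then have key: "2 ^ m * (X + 6 * Z + Y) \<le> 9 ^ k * (H + E)\<^sup>2"
    using IH_lower IH_upper
    by (intro bonami_step_inequality) (auto simp: X_def Y_def H_def E_def intro!: sum_nonneg)
  have "2 ^ Suc m * (\<Sum>x\<in>cube (Suc m). (cmod (fourier_sum a (Suc m) x)) ^ 4)
      \<le> 4 * (2 ^ m * (X + 6 * Z + Y))"
    using sum_cube_Suc_pow4_fourier_sum_le[of a m, folded h_def e_def] by (simp add: X_def Y_def Z_def)
  also have "\<dots> \<le> 9 ^ k * (2 * H + 2 * E)\<^sup>2"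
  proof -
    have "9 ^ k * (2 * H + 2 * E)\<^sup>2 = 4 * (9 ^ k * (H + E)\<^sup>2)" by (simp add: power2_eq_square algebra_simps)
    then show ?thesis using key by linarith
  qed
  also have "2 * H + 2 * E = (\<Sum>x\<in>cube (Suc m). (cmod (fourier_sum a (Suc m) x))\<^sup>2)"
    by (simp add: sum_cube_Suc_norm_sq_fourier_sum H_def E_def h_def e_def)
  finally show ?thesis .
qed

lemma bonami_inequality:
  assumes "degree_le a m k"
  shows "2 ^ m * (\<Sum>x\<in>cube m. (cmod (fourier_sum a m x)) ^ 4)
       \<le> 9 ^ k * (\<Sum>x\<in>cube m. (cmod (fourier_sum a m x))\<^sup>2)\<^sup>2"
  using assms
proof (induction m arbitrary: a k)
  case 0
  have "cube 0 = {[]}" by (auto simp: cube_def)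
  moreover have "1 * (cmod (a {})) ^ 4 \<le> 9 ^ k * (cmod (a {})) ^ 4"
    by (intro mult_right_mono) simp_all
  ultimately show ?case
    by (simp add: fourier_sum_def chi_def flip: power_mult)
next
  case (Suc m)
  show ?case by (rule bonami_inequality_Suc[OF Suc.IH Suc.prems])
qed

lemma sum_sq_cube_le:
  fixes g :: "'a \<Rightarrow> real"
  assumes "\<And>x. g x \<ge> 0"
  shows "(\<Sum>x\<in>A. (g x)\<^sup>2) ^ 3 \<le> (\<Sum>x\<in>A. g x)\<^sup>2 * (\<Sum>x\<in>A. (g x) ^ 4)"
proof -
  define E1 where "E1 = (\<Sum>x\<in>A. g x)"
  define E2 where "E2 = (\<Sum>x\<in>A. (g x)\<^sup>2)"
  define E3 where "E3 = (\<Sum>x\<in>A. (g x) ^ 3)"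
  define E4 where "E4 = (\<Sum>x\<in>A. (g x) ^ 4)"
  have "E2\<^sup>2 \<le> E1 * E3"
    using Cauchy_Schwarz_ineq_sum[of "\<lambda>x. sqrt (g x)" "\<lambda>x. g x * sqrt (g x)" A] assms
    by (simp add: E1_def E2_def E3_def power2_eq_square power3_eq_cube mult_ac)
  moreover have "E3\<^sup>2 \<le> E2 * E4"
    using Cauchy_Schwarz_ineq_sum[of g "\<lambda>x. (g x)\<^sup>2" A]
    by (simp add: E2_def E3_def E4_def power2_eq_square power3_eq_cube
        numeral_eq_Suc mult_ac)
  moreover have "E1 \<ge> 0" "E2 \<ge> 0" "E3 \<ge> 0"
    using assms by (auto simp: E1_def E2_def E3_def intro!: sum_nonneg)
  ultimately have "(E2\<^sup>2)\<^sup>2 \<le> E1\<^sup>2 * (E2 * E4)"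
    by (smt (verit, best) mult_left_mono power_mono power_mult_distrib zero_le_power2)
  then have "E2 * E2 ^ 3 \<le> E2 * (E1\<^sup>2 * E4)"
    by (simp add: power2_eq_square power3_eq_cube mult_ac)
  then have "E2 ^ 3 \<le> E1\<^sup>2 * E4" if "E2 > 0" using that by simp
  moreover have "0 \<le> E1\<^sup>2 * E4"
    using assms by (auto simp: E4_def intro!: mult_nonneg_nonneg sum_nonneg)
  ultimately show ?thesis
    using \<open>E2 \<ge> 0\<close> by (cases "E2 = 0") (auto simp: E1_def E2_def E4_def)
qed

lemma khintchine_inequality:
  assumes "degree_le a m k"
  shows "2 ^ m * (\<Sum>x\<in>cube m. (cmod (fourier_sum a m x))\<^sup>2)
       \<le> 9 ^ k * (\<Sum>x\<in>cube m. cmod (fourier_sum a m x))\<^sup>2"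
proof -
  define E1 where "E1 = (\<Sum>x\<in>cube m. cmod (fourier_sum a m x))"
  define E2 where "E2 = (\<Sum>x\<in>cube m. (cmod (fourier_sum a m x))\<^sup>2)"
  define E4 where "E4 = (\<Sum>x\<in>cube m. (cmod (fourier_sum a m x)) ^ 4)"
  have "E2 ^ 3 \<le> E1\<^sup>2 * E4"
    unfolding E1_def E2_def E4_def by (rule sum_sq_cube_le) simp
  then have "2 ^ m * E2 ^ 3 \<le> E1\<^sup>2 * (2 ^ m * E4)" by (simp add: algebra_simps)
  also have "\<dots> \<le> E1\<^sup>2 * (9 ^ k * E2\<^sup>2)"
    using bonami_inequality[OF assms] by (intro mult_left_mono) (simp_all add: E2_def E4_def)
  finally have "E2\<^sup>2 * (2 ^ m * E2) \<le> E2\<^sup>2 * (9 ^ k * E1\<^sup>2)"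
    by (simp add: power2_eq_square power3_eq_cube mult_ac)
  moreover have "E2 \<ge> 0" by (simp add: E2_def sum_nonneg)
  ultimately have "2 ^ m * E2 \<le> 9 ^ k * E1\<^sup>2"
    by (cases "E2 = 0") simp_all
  then show ?thesis by (simp add: E1_def E2_def)
qed

lemma khintchine_inequality_coeffs:
  assumes "degree_le a m k"
  shows "2 ^ m * sqrt (\<Sum>S\<in>Pow {0..<m}. (cmod (a S))\<^sup>2) \<le> 3 ^ k * (\<Sum>x\<in>cube m. cmod (fourier_sum a m x))"
proof -
  define W where "W = (\<Sum>S\<in>Pow {0..<m}. (cmod (a S))\<^sup>2)"
  define L1 where "L1 = (\<Sum>x\<in>cube m. cmod (fourier_sum a m x))"
  have "W \<ge> 0" by (simp add: W_def sum_nonneg)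
  then have "(2 ^ m * sqrt W)\<^sup>2 = 2 ^ m * (2 ^ m * W)"
    by (simp add: power_mult_distrib power2_eq_square)
  also have "\<dots> \<le> 9 ^ k * L1\<^sup>2"
    using khintchine_inequality[OF assms] by (simp add: W_def L1_def parseval)
  also have "\<dots> = (3 ^ k * L1)\<^sup>2"
  proof -
    have "(9::real) ^ k = (3 ^ k)\<^sup>2" by (simp add: power2_eq_square flip: power_mult_distrib)
    then show ?thesis by (simp add: power_mult_distrib)
  qed
  finally show ?thesis unfolding W_def L1_def
    by (rule power2_le_imp_le) (simp add: sum_nonneg)
qed

section \<open>The multilinear extension\<close>

definition multilinear_ext :: "(nat set \<Rightarrow> complex) \<Rightarrow> nat \<Rightarrow> (nat \<Rightarrow> real) \<Rightarrow> complex" where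
  "multilinear_ext a m u = (\<Sum>S\<in>Pow {0..<m}. a S * (\<Prod>i\<in>S. complex_of_real (u i)))"

text \<open>The product probability measure on the cube whose \<open>i\<close>-th coordinate has mean \<open>u i\<close>;
  averaging the Fourier sum against it yields the multilinear extension at \<open>u\<close>.\<close>
definition bias_weight :: "(nat \<Rightarrow> real) \<Rightarrow> nat \<Rightarrow> bool list \<Rightarrow> real" where
  "bias_weight u m x = (\<Prod>i<m. (1 + u i * bool_sign (x ! i)) / 2)"

lemma prod_lessThan_if_mem:
  assumes "S \<subseteq> {0..<(m::nat)}"
  shows "(\<Prod>i<m. if i \<in> S then f i else 1) = (\<Prod>i\<in>S. f i)"
proof -
  have "{..<m} \<inter> S = S" using assms by auto
  then show ?thesis by (simp flip: prod.inter_restrict)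
qed

lemma sum_bias_weight_chi:
  assumes "S \<subseteq> {0..<m}"
  shows "(\<Sum>x\<in>cube m. complex_of_real (bias_weight u m x) * chi S x) = (\<Prod>i\<in>S. complex_of_real (u i))"
proof -
  define h where "h i v = complex_of_real ((1 + u i * bool_sign v) / 2)
      * (if i \<in> S then complex_of_real (bool_sign v) else 1)" for i v
  have "complex_of_real (bias_weight u m x) * chi S x = (\<Prod>i<m. h i (x ! i))" for x
    unfolding h_def bias_weight_def of_real_prod prod.distrib chi_eq_prod_bool_sign
    by (simp add: prod_lessThan_if_mem[OF assms])
  then have "(\<Sum>x\<in>cube m. complex_of_real (bias_weight u m x) * chi S x) = (\<Prod>i<m. h i True + h i False)"
    by (simp add: sum_prod_cube)
  also have "\<dots> = (\<Prod>i<m. if i \<in> S then complex_of_real (u i) else 1)"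
    by (intro prod.cong) (auto simp: h_def bool_sign_def field_simps)
  finally show ?thesis by (simp add: prod_lessThan_if_mem[OF assms])
qed

lemma bias_weight_nonneg:
  assumes "\<And>i. i < m \<Longrightarrow> \<bar>u i\<bar> \<le> 1"
  shows "bias_weight u m x \<ge> 0"
  unfolding bias_weight_def
proof (intro prod_nonneg)
  fix i assume "i \<in> {..<m}"
  then have "\<bar>u i * bool_sign (x ! i)\<bar> \<le> 1" using assms by (simp add: abs_mult)
  then show "0 \<le> (1 + u i * bool_sign (x ! i)) / 2" by simp
qed

lemma sum_bias_weight: "(\<Sum>x\<in>cube m. bias_weight u m x) = 1"
  using sum_bias_weight_chi[of "{}" m u] by (simp add: chi_def flip: of_real_sum)

lemma multilinear_ext_eq_average:
  "multilinear_ext a m u = (\<Sum>x\<in>cube m. complex_of_real (bias_weight u m x) * fourier_sum a m x)"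
proof -
  have "multilinear_ext a m u
      = (\<Sum>S\<in>Pow {0..<m}. a S * (\<Sum>x\<in>cube m. complex_of_real (bias_weight u m x) * chi S x))"
    unfolding multilinear_ext_def by (intro sum.cong) (auto simp: sum_bias_weight_chi)
  then show ?thesis
    unfolding fourier_sum_def
    by (simp add: sum_distrib_left sum_distrib_right algebra_simps sum.swap[of _ "cube m"])
qed

lemma norm_multilinear_ext_le_sup_norm:
  assumes "\<And>i. i < m \<Longrightarrow> \<bar>u i\<bar> \<le> 1"
  shows "cmod (multilinear_ext a m u) \<le> sup_norm a m"
proof -
  have "cmod (multilinear_ext a m u)
      \<le> (\<Sum>x\<in>cube m. cmod (complex_of_real (bias_weight u m x) * fourier_sum a m x))"
    unfolding multilinear_ext_eq_average by (rule norm_sum)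
  also have "\<dots> = (\<Sum>x\<in>cube m. bias_weight u m x * cmod (fourier_sum a m x))"
    using bias_weight_nonneg[OF assms] by (simp add: norm_mult)
  also have "\<dots> \<le> (\<Sum>x\<in>cube m. bias_weight u m x * sup_norm a m)"
    using bias_weight_nonneg[OF assms] norm_fourier_sum_le_sup_norm
    by (intro sum_mono mult_left_mono) auto
  also have "\<dots> = sup_norm a m" by (simp add: sum_bias_weight flip: sum_distrib_right)
  finally show ?thesis .
qed

section \<open>Homogeneous parts and derivatives\<close>

lemma lagrange_basis_exists:
  fixes \<tau> :: "nat \<Rightarrow> 'a::field"
  assumes "inj_on \<tau> {..k}"
  obtains L where "\<And>l. l \<le> k \<Longrightarrow> degree (L l) \<le> k"
    and "\<And>l l'. l \<le> k \<Longrightarrow> l' \<le> k \<Longrightarrow> poly (L l) (\<tau> l') = (if l' = l then 1 else 0)"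
proof
  define L where "L l = smult (1 / (\<Prod>i\<in>{..k} - {l}. \<tau> l - \<tau> i)) (\<Prod>i\<in>{..k} - {l}. [:- \<tau> i, 1:])"
    for l
  show "degree (L l) \<le> k" if "l \<le> k" for l
  proof -
    have "degree (\<Prod>i\<in>{..k} - {l}. [:- \<tau> i, 1:]) \<le> (\<Sum>i\<in>{..k} - {l}. degree [:- \<tau> i, 1:])"
      using degree_prod_sum_le[of "{..k} - {l}" "\<lambda>i. [:- \<tau> i, 1:]"] by (simp add: o_def)
    also have "\<dots> = k" using that by simp
    finally show ?thesis unfolding L_def using degree_smult_le order_trans by blast
  qed
  show "poly (L l) (\<tau> l') = (if l' = l then 1 else 0)" if "l \<le> k" "l' \<le> k" for l l'
  proof (cases "l' = l")
    case True
    have "(\<Prod>i\<in>{..k} - {l}. \<tau> l - \<tau> i) \<noteq> 0"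
      using assms that by (auto dest: inj_onD)
    then show ?thesis unfolding L_def using True by (simp add: poly_prod)
  next
    case False
    then have "(\<Prod>i\<in>{..k} - {l}. poly [:- \<tau> i, 1:] (\<tau> l')) = 0"
      using that by (intro prod_zero) auto
    then show ?thesis unfolding L_def using False by (simp add: poly_prod)
  qed
qed

lemma poly_eq_lagrange_interpolation:
  fixes \<tau> :: "nat \<Rightarrow> 'a::field"
  assumes "inj_on \<tau> {..k}"
    and "\<And>l. l \<le> k \<Longrightarrow> degree (L l) \<le> k"
    and "\<And>l l'. l \<le> k \<Longrightarrow> l' \<le> k \<Longrightarrow> poly (L l) (\<tau> l') = (if l' = l then 1 else 0)"
    and "degree p \<le> k"
  shows "p = (\<Sum>l\<le>k. smult (poly p (\<tau> l)) (L l))"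
proof (rule poly_eqI_degree[of "\<tau> ` {..k}"])
  fix x assume "x \<in> \<tau> ` {..k}"
  then obtain l' where "l' \<le> k" "x = \<tau> l'" by auto
  then have "poly (\<Sum>l\<le>k. smult (poly p (\<tau> l)) (L l)) x = (\<Sum>l\<le>k. if l = l' then poly p (\<tau> l) else 0)"
    using assms(3) unfolding poly_sum by (intro sum.cong) auto
  also have "\<dots> = poly p x"
    using \<open>l' \<le> k\<close> \<open>x = \<tau> l'\<close> by (simp add: sum.delta)
  finally show "poly p x = poly (\<Sum>l\<le>k. smult (poly p (\<tau> l)) (L l)) x" ..
next
  have "degree (\<Sum>l\<le>k. smult (poly p (\<tau> l)) (L l)) \<le> k"
    using assms(2) by (intro degree_sum_le) (auto intro: order_trans[OF degree_smult_le])
  then show "degree (\<Sum>l\<le>k. smult (poly p (\<tau> l)) (L l)) < card (\<tau> ` {..k})"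
    using card_image[OF assms(1)] by simp
qed (use assms(4) card_image[OF assms(1)] in simp)

lemma norm_coeff_le_lagrange:
  fixes \<tau> :: "nat \<Rightarrow> 'a::real_normed_field"
  assumes "inj_on \<tau> {..k}"
    and "\<And>l. l \<le> k \<Longrightarrow> degree (L l) \<le> k"
    and "\<And>l l'. l \<le> k \<Longrightarrow> l' \<le> k \<Longrightarrow> poly (L l) (\<tau> l') = (if l' = l then 1 else 0)"
    and "degree p \<le> k" "\<And>l. l \<le> k \<Longrightarrow> norm (poly p (\<tau> l)) \<le> M"
  shows "norm (coeff p j) \<le> M * (\<Sum>l\<le>k. norm (coeff (L l) j))"
proof -
  have "coeff p j = (\<Sum>l\<le>k. poly p (\<tau> l) * coeff (L l) j)"
    by (subst poly_eq_lagrange_interpolation[OF assms(1-4)]) (simp_all add: coeff_sum)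
  then have "norm (coeff p j) \<le> (\<Sum>l\<le>k. norm (poly p (\<tau> l) * coeff (L l) j))"
    by (simp add: norm_sum)
  also have "\<dots> = (\<Sum>l\<le>k. norm (poly p (\<tau> l)) * norm (coeff (L l) j))"
    by (simp add: norm_mult)
  also have "\<dots> \<le> (\<Sum>l\<le>k. M * norm (coeff (L l) j))"
    using assms(5) by (intro sum_mono mult_right_mono) auto
  finally show ?thesis by (simp add: sum_distrib_left)
qed

lemma coeff_le_max_on_interval:
  "\<exists>K\<ge>0. \<forall>(p :: complex poly) M j. degree p \<le> k \<longrightarrow>
      (\<forall>t\<in>{-1..1}. cmod (poly p (complex_of_real t)) \<le> M) \<longrightarrow> cmod (coeff p j) \<le> K * M"
proof -
  define \<tau> :: "nat \<Rightarrow> complex" where "\<tau> l = complex_of_real (real l / real (Suc k))" for l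
  have inj: "inj_on \<tau> {..k}"
    by (rule inj_onI) (simp add: \<tau>_def del: of_nat_Suc)
  obtain L where L_deg: "\<And>l. l \<le> k \<Longrightarrow> degree (L l) \<le> k"
    and L_nodes: "\<And>l l'. l \<le> k \<Longrightarrow> l' \<le> k \<Longrightarrow> poly (L l) (\<tau> l') = (if l' = l then 1 else 0)"
    using lagrange_basis_exists[OF inj] by blast
  define K where "K = (\<Sum>j\<le>k. \<Sum>l\<le>k. cmod (coeff (L l) j))"
  have "cmod (coeff p j) \<le> K * M"
    if p: "degree p \<le> k" and M: "\<forall>t\<in>{-1..1}. cmod (poly p (complex_of_real t)) \<le> M" for p M j
  proof -
    have M_nodes: "cmod (poly p (\<tau> l)) \<le> M" if "l \<le> k" for l
    proof -
      have "real l / real (Suc k) \<in> {-1..1}" using that by (simp add: field_simps del: of_nat_Suc)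
      then show ?thesis using M unfolding \<tau>_def by blast
    qed
    have "(\<Sum>l\<le>k. cmod (coeff (L l) j)) \<le> K"
    proof (cases "j \<le> k")
      case True
      then show ?thesis unfolding K_def
        by (intro member_le_sum[where f = "\<lambda>j. \<Sum>l\<le>k. cmod (coeff (L l) j)"]) (auto intro: sum_nonneg)
    next
      case False
      then have "coeff (L l) j = 0" if "l \<le> k" for l
        using L_deg[OF that] by (simp add: coeff_eq_0)
      then show ?thesis by (simp add: K_def sum_nonneg)
    qed
    moreover have "0 \<le> M" using M_nodes[of 0] norm_ge_zero[of "poly p (\<tau> 0)"] by linarith
    ultimately show ?thesis
      using norm_coeff_le_lagrange[OF inj L_deg L_nodes p M_nodes, of j]
      by (metis mult.commute mult_left_mono order_trans)
  qed
  moreover have "K \<ge> 0" by (simp add: K_def sum_nonneg)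
  ultimately show ?thesis by blast
qed

definition homogeneous_part :: "(nat set \<Rightarrow> complex) \<Rightarrow> nat \<Rightarrow> nat set \<Rightarrow> complex" where
  "homogeneous_part a j S = (if card S = j then a S else 0)"

lemma homogeneous_homogeneous_part: "homogeneous (homogeneous_part a j) m j"
  by (simp add: homogeneous_def homogeneous_part_def)

lemma fourier_sum_homogeneous_part_0: "fourier_sum (homogeneous_part a 0) m x = a {}"
proof -
  have "fourier_sum (homogeneous_part a 0) m x = (\<Sum>S\<in>Pow {0..<m}. if S = {} then a S else 0)"
    unfolding fourier_sum_def homogeneous_part_def
    by (intro sum.cong) (auto simp: chi_def card_eq_0_iff finite_subset)
  then show ?thesis by (simp add: sum.delta)
qed

lemma multilinear_ext_scaled_point:
  assumes "degree_le a m k" "z \<in> cube m"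
  shows "multilinear_ext a m (\<lambda>i. t * bool_sign (z ! i))
       = (\<Sum>j\<le>k. fourier_sum (homogeneous_part a j) m z * complex_of_real t ^ j)"
proof -
  have "multilinear_ext a m (\<lambda>i. t * bool_sign (z ! i))
      = (\<Sum>S\<in>Pow {0..<m}. \<Sum>j\<le>k. homogeneous_part a j S * chi S z * complex_of_real t ^ j)"
    unfolding multilinear_ext_def
  proof (intro sum.cong refl)
    fix S assume S: "S \<in> Pow {0..<m}"
    show "a S * (\<Prod>i\<in>S. complex_of_real (t * bool_sign (z ! i)))
        = (\<Sum>j\<le>k. homogeneous_part a j S * chi S z * complex_of_real t ^ j)"
    proof (cases "card S \<le> k")
      case True
      have "(\<Sum>j\<le>k. homogeneous_part a j S * chi S z * complex_of_real t ^ j)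
          = (\<Sum>j\<le>k. if card S = j then a S * chi S z * complex_of_real t ^ j else 0)"
        by (intro sum.cong) (auto simp: homogeneous_part_def)
      also have "\<dots> = a S * chi S z * complex_of_real t ^ card S"
        using True by (simp add: sum.delta')
      finally show ?thesis
        by (simp add: chi_eq_prod_bool_sign prod.distrib mult_ac)
    next
      case False
      then show ?thesis using assms(1) S by (auto simp: degree_le_def homogeneous_part_def)
    qed
  qed
  then show ?thesis
    unfolding fourier_sum_def by (simp add: sum.swap[of _ "Pow _"] sum_distrib_right)
qed

text \<open>Restricting the multilinear extension to the segment through a vertex \<open>z\<close> gives a
  polynomial whose coefficients are the homogeneous parts at \<open>z\<close>.\<close>
lemma sup_norm_homogeneous_part_le:
  "\<exists>K\<ge>0. \<forall>m a j. degree_le a m k \<longrightarrow> sup_norm (homogeneous_part a j) m \<le> K * sup_norm a m"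
proof -
  obtain K where K: "K \<ge> 0" "\<And>(p :: complex poly) M j. degree p \<le> k \<Longrightarrow>
      \<forall>t\<in>{-1..1}. cmod (poly p (complex_of_real t)) \<le> M \<Longrightarrow> cmod (coeff p j) \<le> K * M"
    using coeff_le_max_on_interval[of k] by blast
  have "sup_norm (homogeneous_part a j) m \<le> K * sup_norm a m" if a: "degree_le a m k" for m a j
  proof (rule sup_norm_le)
    fix z assume z: "z \<in> cube m"
    define p where "p = (\<Sum>j\<le>k. monom (fourier_sum (homogeneous_part a j) m z) j)"
    have "degree p \<le> k"
      unfolding p_def by (intro degree_sum_le) (auto intro: order_trans[OF degree_monom_le])
    moreover have "cmod (poly p (complex_of_real t)) \<le> sup_norm a m" if "t \<in> {-1..1}" for t
      using that multilinear_ext_scaled_point[OF a z, of t]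
        norm_multilinear_ext_le_sup_norm[of m "\<lambda>i. t * bool_sign (z ! i)" a]
      by (simp add: p_def poly_sum poly_monom abs_mult abs_le_iff mult.commute)
    ultimately have "cmod (coeff p j) \<le> K * sup_norm a m" by (intro K(2)) auto
    moreover have "coeff p j = fourier_sum (homogeneous_part a j) m z"
    proof (cases "j \<le> k")
      case False
      then have "homogeneous_part a j S = 0" if "S \<subseteq> {0..<m}" for S
        using a that by (auto simp: degree_le_def homogeneous_part_def)
      then show ?thesis using False by (simp add: p_def coeff_sum fourier_sum_def)
    qed (simp add: p_def coeff_sum)
    ultimately show "cmod (fourier_sum (homogeneous_part a j) m z) \<le> K * sup_norm a m" by simp
  qed
  then show ?thesis using K(1) by blast
qed

text \<open>The Fourier coefficients of the discrete derivative \<open>\<partial>\<^sub>t f\<close>.\<close>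
definition deriv_coeffs :: "(nat set \<Rightarrow> complex) \<Rightarrow> nat \<Rightarrow> nat set \<Rightarrow> complex" where
  "deriv_coeffs a t T = (if t \<notin> T then a (insert t T) else 0)"

lemma sum_subsets_containing:
  assumes "t < (m::nat)"
  shows "(\<Sum>S | S \<subseteq> {0..<m} \<and> t \<in> S. F S) = (\<Sum>T | T \<subseteq> {0..<m} \<and> t \<notin> T. F (insert t T))"
proof -
  have inj: "inj_on (insert t) {T. T \<subseteq> {0..<m} \<and> t \<notin> T}" by (auto simp: inj_on_def)
  have "{S. S \<subseteq> {0..<m} \<and> t \<in> S} = insert t ` {T. T \<subseteq> {0..<m} \<and> t \<notin> T}"
  proof (intro set_eqI iffI)
    fix S assume "S \<in> {S. S \<subseteq> {0..<m} \<and> t \<in> S}"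
    then have "S = insert t (S - {t})" "S - {t} \<in> {T. T \<subseteq> {0..<m} \<and> t \<notin> T}" by auto
    then show "S \<in> insert t ` {T. T \<subseteq> {0..<m} \<and> t \<notin> T}" by (metis image_eqI)
  qed (use assms in auto)
  then show ?thesis by (simp add: sum.reindex[OF inj])
qed

lemma sum_deriv_coeffs:
  "(\<Sum>T\<in>Pow {0..<m}. F (deriv_coeffs a t T) T)
   = (\<Sum>T | T \<subseteq> {0..<m} \<and> t \<notin> T. F (a (insert t T)) T) + (\<Sum>T | T \<subseteq> {0..<m} \<and> t \<in> T. F 0 T)"
proof -
  have "Pow {0..<m} = {T. T \<subseteq> {0..<m} \<and> t \<notin> T} \<union> {T. T \<subseteq> {0..<m} \<and> t \<in> T}" by auto
  then have "(\<Sum>T\<in>Pow {0..<m}. F (deriv_coeffs a t T) T)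
      = (\<Sum>T | T \<subseteq> {0..<m} \<and> t \<notin> T. F (deriv_coeffs a t T) T)
        + (\<Sum>T | T \<subseteq> {0..<m} \<and> t \<in> T. F (deriv_coeffs a t T) T)"
    by (simp only:) (rule sum.union_disjoint, auto)
  also have "\<dots> = (\<Sum>T | T \<subseteq> {0..<m} \<and> t \<notin> T. F (a (insert t T)) T)
        + (\<Sum>T | T \<subseteq> {0..<m} \<and> t \<in> T. F 0 T)"
    by (intro arg_cong2[where f = "(+)"] sum.cong) (auto simp: deriv_coeffs_def)
  finally show ?thesis .
qed

lemma fourier_sum_deriv_coeffs:
  assumes "t < m"
  shows "fourier_sum (deriv_coeffs a t) m x = (\<Sum>S | S \<subseteq> {0..<m} \<and> t \<in> S. a S * chi (S - {t}) x)"
  unfolding fourier_sum_def sum_deriv_coeffs[where F = "\<lambda>c T. c * chi T x"] sum_subsets_containing[OF assms]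
  by (simp add: insert_Diff_if)

lemma sum_norm_sq_deriv_coeffs:
  assumes "t < m"
  shows "(\<Sum>T\<in>Pow {0..<m}. (cmod (deriv_coeffs a t T))\<^sup>2) = (\<Sum>S | S \<subseteq> {0..<m} \<and> t \<in> S. (cmod (a S))\<^sup>2)"
  unfolding sum_deriv_coeffs[where F = "\<lambda>c T. (cmod c)\<^sup>2"] sum_subsets_containing[OF assms] by simp

lemma degree_le_deriv_coeffs:
  assumes "degree_le a m k" "t < m"
  shows "degree_le (deriv_coeffs a t) m k"
  unfolding degree_le_def
proof (intro allI impI)
  fix T assume T: "T \<subseteq> {0..<m}" "k < card T"
  show "deriv_coeffs a t T = 0"
  proof (cases "t \<in> T")
    case False
    then have "card (insert t T) = Suc (card T)" using T finite_subset[OF T(1)] by simp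
    then show ?thesis using assms T False by (auto simp: deriv_coeffs_def degree_le_def)
  qed (simp add: deriv_coeffs_def)
qed

text \<open>The Fourier coefficients of \<open>z \<mapsto> f((u + y z) / 2)\<close>, with \<open>f\<close> evaluated through its
  multilinear extension.  For \<open>u\<close> a vertex \<open>x\<close> and homogeneous \<open>f\<close> of degree \<open>k\<close>, the
  degree-one part of this function is \<open>2\<^sup>-\<^sup>k \<Sum>\<^sub>t y\<^sub>t z\<^sub>t \<partial>\<^sub>t f(x)\<close>.\<close>
definition affine_subst_coeffs ::
    "(nat set \<Rightarrow> complex) \<Rightarrow> nat \<Rightarrow> (nat \<Rightarrow> real) \<Rightarrow> (nat \<Rightarrow> real) \<Rightarrow> nat set \<Rightarrow> complex" where
  "affine_subst_coeffs a m u y T = (\<Sum>S | S \<subseteq> {0..<m} \<and> T \<subseteq> S.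
      a S / 2 ^ card S * (\<Prod>i\<in>T. complex_of_real (y i)) * (\<Prod>i\<in>S - T. complex_of_real (u i)))"

lemma fourier_sum_affine_subst:
  assumes "z \<in> cube m"
  shows "fourier_sum (affine_subst_coeffs a m u y) m z
       = multilinear_ext a m (\<lambda>i. (u i + y i * bool_sign (z ! i)) / 2)"
proof -
  let ?v = "\<lambda>i. complex_of_real (y i * bool_sign (z ! i))" and ?u = "\<lambda>i. complex_of_real (u i)"
  have "fourier_sum (affine_subst_coeffs a m u y) m z
      = (\<Sum>T\<in>Pow {0..<m}. \<Sum>S | S \<in> Pow {0..<m} \<and> T \<subseteq> S. a S / 2 ^ card S * (prod ?v T * prod ?u (S - T)))"
    unfolding fourier_sum_def affine_subst_coeffs_def sum_distrib_right
    by (intro sum.cong refl) (auto simp: chi_eq_prod_bool_sign prod.distrib mult_ac)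
  also have "\<dots> = (\<Sum>S\<in>Pow {0..<m}. a S / 2 ^ card S * (\<Sum>T\<in>Pow S. prod ?v T * prod ?u (S - T)))"
    by (subst sum.swap_restrict) (auto simp: sum_distrib_left intro!: sum.cong)
  also have "\<dots> = (\<Sum>S\<in>Pow {0..<m}. a S / 2 ^ card S * (\<Prod>i\<in>S. ?v i + ?u i))"
    by (intro sum.cong refl) (auto simp: prod_add finite_subset)
  also have "\<dots> = multilinear_ext a m (\<lambda>i. (u i + y i * bool_sign (z ! i)) / 2)"
    unfolding multilinear_ext_def by (intro sum.cong refl) (simp add: prod_dividef add.commute)
  finally show ?thesis .
qed

lemma degree_le_affine_subst:
  assumes "degree_le a m k"
  shows "degree_le (affine_subst_coeffs a m u y) m k"
  unfolding degree_le_def affine_subst_coeffs_def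
proof (intro allI impI sum.neutral ballI)
  fix T S assume T: "T \<subseteq> {0..<m}" "k < card T" and S: "S \<in> {S. S \<subseteq> {0..<m} \<and> T \<subseteq> S}"
  then have "k < card S" using card_mono[of S T] finite_subset[of S "{0..<m}"] by auto
  with S assms have "a S = 0" by (auto simp: degree_le_def)
  then show "a S / 2 ^ card S * (\<Prod>i\<in>T. complex_of_real (y i)) * (\<Prod>i\<in>S - T. complex_of_real (u i)) = 0"
    by simp
qed

lemma sup_norm_affine_subst_le:
  assumes "\<And>i. \<bar>u i\<bar> \<le> 1" "\<And>i. \<bar>y i\<bar> \<le> 1"
  shows "sup_norm (affine_subst_coeffs a m u y) m \<le> sup_norm a m"
proof (rule sup_norm_le)
  fix z assume z: "z \<in> cube m"
  have "\<bar>(u i + y i * bool_sign (z ! i)) / 2\<bar> \<le> 1" for i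
    using abs_triangle_ineq[of "u i" "y i * bool_sign (z ! i)"] assms[of i] by (simp add: abs_mult)
  then show "cmod (fourier_sum (affine_subst_coeffs a m u y) m z) \<le> sup_norm a m"
    unfolding fourier_sum_affine_subst[OF z] by (intro norm_multilinear_ext_le_sup_norm)
qed

lemma affine_subst_coeffs_singleton:
  assumes "homogeneous a m k" "x \<in> cube m" "t < m"
  shows "affine_subst_coeffs a m (\<lambda>i. bool_sign (x ! i)) y {t}
       = complex_of_real (y t) * fourier_sum (deriv_coeffs a t) m x / 2 ^ k"
proof -
  have "affine_subst_coeffs a m (\<lambda>i. bool_sign (x ! i)) y {t}
      = (\<Sum>S | S \<subseteq> {0..<m} \<and> t \<in> S. complex_of_real (y t) * (a S * chi (S - {t}) x) / 2 ^ k)"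
    unfolding affine_subst_coeffs_def
  proof (intro sum.cong)
    fix S assume "S \<in> {S. S \<subseteq> {0..<m} \<and> t \<in> S}"
    then have "a S = 0 \<or> card S = k" using assms(1) by (auto simp: homogeneous_def)
    then show "a S / 2 ^ card S * (\<Prod>i\<in>{t}. complex_of_real (y i))
        * (\<Prod>i\<in>S - {t}. complex_of_real (bool_sign (x ! i)))
        = complex_of_real (y t) * (a S * chi (S - {t}) x) / 2 ^ k"
      by (auto simp: chi_eq_prod_bool_sign mult_ac)
  qed auto
  then show ?thesis
    by (simp add: fourier_sum_deriv_coeffs[OF assms(3)] sum_distrib_left sum_divide_distrib)
qed

lemma fourier_sum_homogeneous_part_1_ones:
  "fourier_sum (homogeneous_part b 1) m (replicate m True) = (\<Sum>t<m. b {t})"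
proof -
  have "fourier_sum (homogeneous_part b 1) m (replicate m True)
      = (\<Sum>S\<in>Pow {0..<m}. if card S = 1 then b S else 0)"
    unfolding fourier_sum_def homogeneous_part_def
    by (intro sum.cong) (auto simp: chi_def subset_iff)
  also have "\<dots> = (\<Sum>S\<in>{S\<in>Pow {0..<m}. card S = 1}. b S)"
    by (rule sum.inter_filter[symmetric]) simp
  also have "{S\<in>Pow {0..<m}. card S = 1} = (\<lambda>t. {t}) ` {..<m}"
    by (auto simp: card_1_singleton_iff)
  finally show ?thesis by (simp add: sum.reindex)
qed

lemma sum_norm_le_signed_sums:
  fixes z :: "'a \<Rightarrow> complex"
  obtains y1 y2 :: "'a \<Rightarrow> real" where "\<And>t. \<bar>y1 t\<bar> \<le> 1" "\<And>t. \<bar>y2 t\<bar> \<le> 1"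
    and "(\<Sum>t\<in>A. cmod (z t))
         \<le> cmod (\<Sum>t\<in>A. complex_of_real (y1 t) * z t) + cmod (\<Sum>t\<in>A. complex_of_real (y2 t) * z t)"
proof
  define y1 where "y1 t = (if Re (z t) \<ge> 0 then 1 else (-1 :: real))" for t
  define y2 where "y2 t = (if Im (z t) \<ge> 0 then 1 else (-1 :: real))" for t
  show "\<bar>y1 t\<bar> \<le> 1" "\<bar>y2 t\<bar> \<le> 1" for t by (simp_all add: y1_def y2_def)
  have "cmod (z t) \<le> y1 t * Re (z t) + y2 t * Im (z t)" for t
  proof -
    have "\<bar>Re (z t)\<bar> = y1 t * Re (z t)" "\<bar>Im (z t)\<bar> = y2 t * Im (z t)"
      by (auto simp: y1_def y2_def)
    then show ?thesis using cmod_le[of "z t"] by simp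
  qed
  then have "(\<Sum>t\<in>A. cmod (z t)) \<le> (\<Sum>t\<in>A. y1 t * Re (z t)) + (\<Sum>t\<in>A. y2 t * Im (z t))"
    unfolding sum.distrib[symmetric] by (intro sum_mono)
  also have "\<dots> = Re (\<Sum>t\<in>A. complex_of_real (y1 t) * z t) + Im (\<Sum>t\<in>A. complex_of_real (y2 t) * z t)"
    by (simp add: Re_sum Im_sum)
  also have "\<dots> \<le> cmod (\<Sum>t\<in>A. complex_of_real (y1 t) * z t) + cmod (\<Sum>t\<in>A. complex_of_real (y2 t) * z t)"
    by (intro add_mono complex_Re_le_cmod) (meson abs_Im_le_cmod abs_le_D1)
  finally show "(\<Sum>t\<in>A. cmod (z t))
      \<le> cmod (\<Sum>t\<in>A. complex_of_real (y1 t) * z t) + cmod (\<Sum>t\<in>A. complex_of_real (y2 t) * z t)" .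
qed

lemma norm_sum_weighted_derivs_le:
  assumes "\<And>m a j. degree_le a m k \<Longrightarrow> sup_norm (homogeneous_part a j) m \<le> K * sup_norm a m"
    and "homogeneous a m k" "x \<in> cube m" "\<And>t. \<bar>y t\<bar> \<le> 1" "K \<ge> 0"
  shows "cmod (\<Sum>t<m. complex_of_real (y t) * fourier_sum (deriv_coeffs a t) m x) \<le> 2 ^ k * K * sup_norm a m"
proof -
  define b where "b = affine_subst_coeffs a m (\<lambda>i. bool_sign (x ! i)) y"
  have "fourier_sum (homogeneous_part b 1) m (replicate m True)
      = (\<Sum>t<m. complex_of_real (y t) * fourier_sum (deriv_coeffs a t) m x) / 2 ^ k"
    unfolding fourier_sum_homogeneous_part_1_ones b_def sum_divide_distrib
    by (intro sum.cong) (simp_all add: affine_subst_coeffs_singleton[OF assms(2,3)])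
  then have "cmod (\<Sum>t<m. complex_of_real (y t) * fourier_sum (deriv_coeffs a t) m x) / 2 ^ k
      = cmod (fourier_sum (homogeneous_part b 1) m (replicate m True))"
    by (simp add: norm_divide norm_power)
  also have "\<dots> \<le> sup_norm (homogeneous_part b 1) m"
    by (rule norm_fourier_sum_le_sup_norm) (simp add: cube_def)
  also have "\<dots> \<le> K * sup_norm b m"
    using assms(1) degree_le_affine_subst homogeneous_imp_degree_le[OF assms(2)] by (simp add: b_def)
  also have "\<dots> \<le> K * sup_norm a m"
    using assms(4,5) sup_norm_affine_subst_le[of "\<lambda>i. bool_sign (x ! i)" y a m]
    by (simp add: b_def mult_left_mono)
  finally show ?thesis by (simp add: divide_le_eq mult_ac)
qed

lemma sum_norm_deriv_le_sup_norm:
  "\<exists>D\<ge>0. \<forall>m a x. homogeneous a m k \<longrightarrow> x \<in> cube m \<longrightarrow>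
      (\<Sum>t<m. cmod (fourier_sum (deriv_coeffs a t) m x)) \<le> D * sup_norm a m"
proof -
  obtain K where K: "K \<ge> 0" "\<And>m a j. degree_le a m k \<Longrightarrow> sup_norm (homogeneous_part a j) m \<le> K * sup_norm a m"
    using sup_norm_homogeneous_part_le[of k] by blast
  have "(\<Sum>t<m. cmod (fourier_sum (deriv_coeffs a t) m x)) \<le> (2 * 2 ^ k * K) * sup_norm a m"
    if "homogeneous a m k" "x \<in> cube m" for m a x
  proof -
    obtain y1 y2 where y1: "\<And>t. \<bar>y1 t\<bar> \<le> 1" and y2: "\<And>t. \<bar>y2 t\<bar> \<le> 1" and
      split: "(\<Sum>t<m. cmod (fourier_sum (deriv_coeffs a t) m x))
        \<le> cmod (\<Sum>t<m. complex_of_real (y1 t) * fourier_sum (deriv_coeffs a t) m x)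
         + cmod (\<Sum>t<m. complex_of_real (y2 t) * fourier_sum (deriv_coeffs a t) m x)"
      by (rule sum_norm_le_signed_sums[where z = "\<lambda>t. fourier_sum (deriv_coeffs a t) m x" and A = "{..<m}"]) auto
    have bound: "cmod (\<Sum>t<m. complex_of_real (y t) * fourier_sum (deriv_coeffs a t) m x)
        \<le> 2 ^ k * K * sup_norm a m" if "\<And>t. \<bar>y t\<bar> \<le> 1" for y
      by (rule norm_sum_weighted_derivs_le[where K = K]) (use K that \<open>homogeneous a m k\<close> \<open>x \<in> cube m\<close> in auto)
    show ?thesis using split bound[of y1, OF y1] bound[of y2, OF y2] by linarith
  qed
  then show ?thesis using K(1) by (intro exI[of _ "2 * 2 ^ k * K"]) auto
qed

text \<open>By Parseval, \<open>\<parallel>\<partial>\<^sub>t f\<parallel>\<^sub>2\<close> is the square root of \<open>\<Sum>\<^bsub>S \<ni> t\<^esub> |a\<^sub>S|\<^sup>2\<close>, and Khintchine's inequality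
  bounds it by \<open>3\<^sup>k \<parallel>\<partial>\<^sub>t f\<parallel>\<^sub>1\<close>.\<close>
lemma sum_L2_deriv_le_sup_norm:
  assumes "homogeneous a m k"
    and "\<And>x. x \<in> cube m \<Longrightarrow> (\<Sum>t<m. cmod (fourier_sum (deriv_coeffs a t) m x)) \<le> D * sup_norm a m"
  shows "(\<Sum>t<m. sqrt (\<Sum>S | S \<subseteq> {0..<m} \<and> t \<in> S. (cmod (a S))\<^sup>2)) \<le> 3 ^ k * D * sup_norm a m"
proof -
  have L2_L1: "2 ^ m * sqrt (\<Sum>S | S \<subseteq> {0..<m} \<and> t \<in> S. (cmod (a S))\<^sup>2)
      \<le> 3 ^ k * (\<Sum>x\<in>cube m. cmod (fourier_sum (deriv_coeffs a t) m x))" if t: "t < m" for t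
    using khintchine_inequality_coeffs[OF degree_le_deriv_coeffs[OF homogeneous_imp_degree_le[OF assms(1)] t]]
    by (simp add: sum_norm_sq_deriv_coeffs[OF t])
  have "2 ^ m * (\<Sum>t<m. sqrt (\<Sum>S | S \<subseteq> {0..<m} \<and> t \<in> S. (cmod (a S))\<^sup>2))
      \<le> 3 ^ k * (\<Sum>x\<in>cube m. \<Sum>t<m. cmod (fourier_sum (deriv_coeffs a t) m x))"
    using sum_mono[OF L2_L1, of "{..<m}"] by (simp add: sum_distrib_left sum.swap[of _ "cube m"])
  also have "\<dots> \<le> 3 ^ k * (\<Sum>x\<in>cube m. D * sup_norm a m)"
    by (intro mult_left_mono sum_mono assms(2)) auto
  also have "\<dots> = 2 ^ m * (3 ^ k * D * sup_norm a m)"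
    by (simp add: card_cube)
  finally show ?thesis by simp
qed

section \<open>Blei's inequality\<close>

definition index_tuples :: "nat \<Rightarrow> nat \<Rightarrow> nat list set" where
  "index_tuples k m = {I. length I = k \<and> set I \<subseteq> {0..<m}}"

definition mixed_norm :: "(nat list \<Rightarrow> real) \<Rightarrow> nat \<Rightarrow> nat \<Rightarrow> nat \<Rightarrow> real" where
  "mixed_norm b k m j = (\<Sum>t<m. sqrt (\<Sum>I | I \<in> index_tuples k m \<and> I ! j = t. (b I)\<^sup>2))"

lemma finite_index_tuples [simp]: "finite (index_tuples k m)"
  using finite_lists_length_eq[of "{0..<m}" k] by (simp add: index_tuples_def conj_commute)

lemma sum_index_tuples_Suc:
  "(\<Sum>J\<in>index_tuples (Suc k) m. F J) = (\<Sum>i<m. \<Sum>I\<in>index_tuples k m. F (i # I))"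
proof -
  have inj: "inj_on (\<lambda>(I, i). i # I) (index_tuples k m \<times> {..<m})" by (auto simp: inj_on_def)
  have eq: "index_tuples (Suc k) m = (\<lambda>(I, i). i # I) ` (index_tuples k m \<times> {..<m})"
    using lists_length_Suc_eq[of "{0..<m}" k] by (auto simp: index_tuples_def conj_commute atLeast0LessThan)
  have "(\<Sum>J\<in>index_tuples (Suc k) m. F J) = sum (F \<circ> (\<lambda>(I, i). i # I)) (index_tuples k m \<times> {..<m})"
    unfolding eq by (rule sum.reindex[OF inj])
  also have "\<dots> = (\<Sum>I\<in>index_tuples k m. \<Sum>i<m. F (i # I))"
    unfolding sum.cartesian_product by (simp add: case_prod_unfold)
  finally show ?thesis by (simp add: sum.swap[of _ "index_tuples k m"])
qed

lemma sum_index_tuples_Suc_filter: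
  "(\<Sum>J | J \<in> index_tuples (Suc k) m \<and> P J. F J) = (\<Sum>i<m. \<Sum>I | I \<in> index_tuples k m \<and> P (i # I). F (i # I))"
  using sum_index_tuples_Suc[of "\<lambda>J. if P J then F J else 0"]
  by (simp add: sum.inter_filter[symmetric] Collect_conj_eq[symmetric])

lemma mixed_norm_nonneg: "mixed_norm b k m j \<ge> 0"
  unfolding mixed_norm_def by (auto intro!: sum_nonneg)

lemma mixed_norm_Suc_0: "mixed_norm b (Suc k) m 0 = (\<Sum>t<m. sqrt (\<Sum>I\<in>index_tuples k m. (b (t # I))\<^sup>2))"
  unfolding mixed_norm_def sum_index_tuples_Suc_filter
proof (intro sum.cong refl arg_cong[where f = sqrt])
  fix t assume "t \<in> {..<m}"
  have "(\<Sum>i<m. \<Sum>I | I \<in> index_tuples k m \<and> (i # I) ! 0 = t. (b (i # I))\<^sup>2)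
      = (\<Sum>i<m. if i = t then \<Sum>I\<in>index_tuples k m. (b (t # I))\<^sup>2 else 0)"
    by (intro sum.cong) auto
  then show "(\<Sum>i<m. \<Sum>I | I \<in> index_tuples k m \<and> (i # I) ! 0 = t. (b (i # I))\<^sup>2)
      = (\<Sum>I\<in>index_tuples k m. (b (t # I))\<^sup>2)"
    using \<open>t \<in> {..<m}\<close> by (simp add: sum.delta)
qed

lemma mixed_norm_Suc_Suc:
  "mixed_norm b (Suc k) m (Suc j)
   = (\<Sum>t<m. sqrt (\<Sum>i<m. \<Sum>I | I \<in> index_tuples k m \<and> I ! j = t. (b (i # I))\<^sup>2))"
  unfolding mixed_norm_def sum_index_tuples_Suc_filter by simp

lemma L2_set_sum_le:
  assumes "finite T"
  shows "L2_set (\<lambda>i. \<Sum>t\<in>T. v t i) A \<le> (\<Sum>t\<in>T. L2_set (v t) A)"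
  using assms
proof (induction T rule: finite_induct)
  case (insert t T)
  have "L2_set (\<lambda>i. \<Sum>t\<in>insert t T. v t i) A \<le> L2_set (v t) A + L2_set (\<lambda>i. \<Sum>t\<in>T. v t i) A"
    using insert L2_set_triangle_ineq[of "v t"] by simp
  then show ?case using insert by simp
qed (simp add: L2_set_def)

text \<open>Minkowski's inequality moves the \<open>\<ell>\<^sup>2\<close>-norm in the first index inside the \<open>\<ell>\<^sup>1\<close>-norm.\<close>
lemma sum_sq_mixed_norm_Cons_le:
  "(\<Sum>i<m. (mixed_norm (\<lambda>I. b (i # I)) k m j)\<^sup>2) \<le> (mixed_norm b (Suc k) m (Suc j))\<^sup>2"
proof -
  define v where "v t i = sqrt (\<Sum>I | I \<in> index_tuples k m \<and> I ! j = t. (b (i # I))\<^sup>2)" for t i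
  have "L2_set (\<lambda>i. \<Sum>t<m. v t i) {..<m} \<le> (\<Sum>t<m. L2_set (v t) {..<m})"
    by (rule L2_set_sum_le) simp
  also have "\<dots> = mixed_norm b (Suc k) m (Suc j)"
    unfolding mixed_norm_Suc_Suc L2_set_def v_def
    by (intro sum.cong refl arg_cong[where f = sqrt] real_sqrt_pow2 sum_nonneg) simp
  finally have "(L2_set (\<lambda>i. \<Sum>t<m. v t i) {..<m})\<^sup>2 \<le> (mixed_norm b (Suc k) m (Suc j))\<^sup>2"
    by (intro power_mono) auto
  moreover have "(L2_set (\<lambda>i. \<Sum>t<m. v t i) {..<m})\<^sup>2 = (\<Sum>i<m. (mixed_norm (\<lambda>I. b (i # I)) k m j)\<^sup>2)"
    unfolding L2_set_def mixed_norm_def v_def by (auto intro!: sum_nonneg)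
  ultimately show ?thesis by simp
qed

lemma sum_sq_le_sq_sum:
  fixes x :: "'a \<Rightarrow> real"
  assumes "\<And>j. x j \<ge> 0"
  shows "(\<Sum>j\<in>A. (x j)\<^sup>2) \<le> (\<Sum>j\<in>A. x j)\<^sup>2"
proof -
  have "sqrt (\<Sum>j\<in>A. (x j)\<^sup>2) \<le> (\<Sum>j\<in>A. x j)"
    using L2_set_le_sum[of A x] assms by (simp add: L2_set_def)
  then show ?thesis by (rule sqrt_le_D)
qed

lemma sum_mixed_norm_Cons_sq_le:
  "(\<Sum>i<m. (\<Sum>j<k. mixed_norm (\<lambda>I. b (i # I)) k m j)\<^sup>2)
   \<le> real k * (\<Sum>j<k. mixed_norm b (Suc k) m (Suc j))\<^sup>2"
proof -
  have "(\<Sum>i<m. (\<Sum>j<k. mixed_norm (\<lambda>I. b (i # I)) k m j)\<^sup>2)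
      \<le> (\<Sum>i<m. real k * (\<Sum>j<k. (mixed_norm (\<lambda>I. b (i # I)) k m j)\<^sup>2))"
    using sum_squared_le_sum_of_squares[of "mixed_norm (\<lambda>I. b (_ # I)) k m" "{..<k}"]
    by (intro sum_mono) (simp add: mult.commute)
  also have "\<dots> = real k * (\<Sum>j<k. \<Sum>i<m. (mixed_norm (\<lambda>I. b (i # I)) k m j)\<^sup>2)"
    by (simp add: sum_distrib_left sum.swap[of _ "{..<m}"])
  also have "\<dots> \<le> real k * (\<Sum>j<k. (mixed_norm b (Suc k) m (Suc j))\<^sup>2)"
    by (intro mult_left_mono sum_mono sum_sq_mixed_norm_Cons_le) auto
  also have "\<dots> \<le> real k * (\<Sum>j<k. mixed_norm b (Suc k) m (Suc j))\<^sup>2"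
    by (intro mult_left_mono sum_sq_le_sq_sum mixed_norm_nonneg) auto
  finally show ?thesis .
qed

lemma Holder_inequality_sum:
  fixes a b :: "'i \<Rightarrow> real"
  assumes "finite A" "\<alpha> > 0" "\<beta> > 0" "\<alpha> + \<beta> = 1"
    and "\<And>i. i \<in> A \<Longrightarrow> a i \<ge> 0" "\<And>i. i \<in> A \<Longrightarrow> b i \<ge> 0"
  shows "(\<Sum>i\<in>A. a i powr \<alpha> * b i powr \<beta>) \<le> (\<Sum>i\<in>A. a i) powr \<alpha> * (\<Sum>i\<in>A. b i) powr \<beta>"
proof -
  define SA where "SA = (\<Sum>i\<in>A. a i)"
  define SB where "SB = (\<Sum>i\<in>A. b i)"
  show ?thesis
  proof (cases "SA > 0 \<and> SB > 0")
    case False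
    have "SA \<ge> 0" "SB \<ge> 0" using assms(5,6) by (auto simp: SA_def SB_def intro: sum_nonneg)
    with False have "SA = 0 \<or> SB = 0" by linarith
    then have "\<forall>i\<in>A. a i = 0 \<or> b i = 0"
      using assms(1,5,6) by (auto simp: SA_def SB_def sum_nonneg_eq_0_iff)
    then have "(\<Sum>i\<in>A. a i powr \<alpha> * b i powr \<beta>) = 0" by (intro sum.neutral) auto
    then show ?thesis by simp
  next
    case True
    have "(a i / SA) powr \<alpha> * (b i / SB) powr \<beta> \<le> \<alpha> * (a i / SA) + \<beta> * (b i / SB)" if "i \<in> A" for i
      using Youngs_inequality_0[of \<alpha> \<beta> "a i / SA" "b i / SB"] assms that True
      by (cases "a i = 0 \<or> b i = 0") (auto simp: less_le)
    then have "(\<Sum>i\<in>A. (a i / SA) powr \<alpha> * (b i / SB) powr \<beta>) \<le> (\<Sum>i\<in>A. \<alpha> * (a i / SA) + \<beta> * (b i / SB))"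
      by (rule sum_mono)
    also have "\<dots> = 1" using True assms(4)
      by (simp add: sum.distrib sum_divide_distrib[symmetric] sum_distrib_left[symmetric] SA_def SB_def)
    finally show ?thesis
      using True assms by (simp add: powr_divide sum_divide_distrib[symmetric] divide_le_eq SA_def SB_def)
  qed
qed

lemma powr_sq: "0 \<le> (x::real) \<Longrightarrow> (x\<^sup>2) powr a = x powr (2 * a)"
  by (cases "x = 0") (auto simp: powr_powr[symmetric] simp flip: powr_numeral)

lemma sum_powr_interpolation:
  fixes \<beta> :: "'i \<Rightarrow> real" and k :: nat
  assumes "finite A" "\<And>I. \<beta> I \<ge> 0"
  shows "(\<Sum>I\<in>A. \<beta> I powr (2 * (real k + 1) / (real k + 2)))
      \<le> sqrt (\<Sum>I\<in>A. (\<beta> I)\<^sup>2) powr (2 / (real k + 2))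
        * (\<Sum>I\<in>A. \<beta> I powr (2 * real k / (real k + 1))) powr ((real k + 1) / (real k + 2))"
proof -
  have nz: "real k + 1 \<noteq> 0" "real k + 2 \<noteq> 0" by linarith+
  then have "2 * real k / (real k + 1) * ((real k + 1) / (real k + 2)) = 2 * real k / (real k + 2)"
    by simp
  then have exp: "2 * (1 / (real k + 2)) + 2 * real k / (real k + 1) * ((real k + 1) / (real k + 2))
      = 2 * (real k + 1) / (real k + 2)"
    using nz by (simp add: field_simps)
  have "\<beta> I powr (2 * (real k + 1) / (real k + 2))
      = ((\<beta> I)\<^sup>2) powr (1 / (real k + 2)) * (\<beta> I powr (2 * real k / (real k + 1))) powr ((real k + 1) / (real k + 2))"
    for I
  proof -
    have "((\<beta> I)\<^sup>2) powr (1 / (real k + 2)) * (\<beta> I powr (2 * real k / (real k + 1))) powr ((real k + 1) / (real k + 2))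
        = \<beta> I powr (2 * (1 / (real k + 2))) * \<beta> I powr (2 * real k / (real k + 1) * ((real k + 1) / (real k + 2)))"
      using assms(2)[of I] by (simp add: powr_sq powr_powr)
    also have "\<dots> = \<beta> I powr (2 * (real k + 1) / (real k + 2))"
      by (simp only: exp flip: powr_add)
    finally show ?thesis ..
  qed
  then have "(\<Sum>I\<in>A. \<beta> I powr (2 * (real k + 1) / (real k + 2)))
      \<le> (\<Sum>I\<in>A. (\<beta> I)\<^sup>2) powr (1 / (real k + 2))
        * (\<Sum>I\<in>A. \<beta> I powr (2 * real k / (real k + 1))) powr ((real k + 1) / (real k + 2))"
    by (simp only:) (rule Holder_inequality_sum, use assms in \<open>auto simp: field_simps\<close>)
  also have "(\<Sum>I\<in>A. (\<beta> I)\<^sup>2) = (sqrt (\<Sum>I\<in>A. (\<beta> I)\<^sup>2))\<^sup>2"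
    by (simp add: sum_nonneg)
  also have "\<dots> powr (1 / (real k + 2)) = sqrt (\<Sum>I\<in>A. (\<beta> I)\<^sup>2) powr (2 / (real k + 2))"
    by (subst powr_sq) (simp_all add: sum_nonneg)
  finally show ?thesis .
qed

lemma sum_powr_Cons_le:
  fixes k :: nat and C :: real
  assumes "k \<ge> 1" "C \<ge> 0" "\<And>I. b I \<ge> 0"
    and IH: "\<And>b'. (\<And>I. b' I \<ge> 0) \<Longrightarrow> (\<Sum>I\<in>index_tuples k m. b' I powr (2 * real k / (real k + 1)))
          \<le> C * (\<Sum>j<k. mixed_norm b' k m j) powr (2 * real k / (real k + 1))"
  shows "(\<Sum>i<m. (\<Sum>I\<in>index_tuples k m. b (i # I) powr (2 * real k / (real k + 1))) powr ((real k + 1) / real k))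
       \<le> C powr ((real k + 1) / real k) * real k * (\<Sum>j<k. mixed_norm b (Suc k) m (Suc j))\<^sup>2"
proof -
  define p where "p = 2 * real k / (real k + 1)"
  define e where "e = (real k + 1) / real k"
  have pe: "p * e = 2" using assms(1) by (simp add: p_def e_def)
  define T where "T i = (\<Sum>j<k. mixed_norm (\<lambda>I. b (i # I)) k m j)" for i
  have "(\<Sum>I\<in>index_tuples k m. b (i # I) powr p) powr e \<le> C powr e * (T i)\<^sup>2" for i
  proof -
    have "(\<Sum>I\<in>index_tuples k m. b (i # I) powr p) powr e \<le> (C * T i powr p) powr e"
      using IH[of "\<lambda>I. b (i # I)"] assms(3) by (intro powr_mono2) (auto simp: p_def e_def T_def sum_nonneg)
    also have "\<dots> = C powr e * (T i)\<^sup>2"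
      using assms(2) pe by (simp add: T_def powr_mult powr_powr sum_nonneg mixed_norm_nonneg)
    finally show ?thesis .
  qed
  then have "(\<Sum>i<m. (\<Sum>I\<in>index_tuples k m. b (i # I) powr p) powr e) \<le> C powr e * (\<Sum>i<m. (T i)\<^sup>2)"
    by (simp add: sum_distrib_left sum_mono)
  also have "\<dots> \<le> C powr e * (real k * (\<Sum>j<k. mixed_norm b (Suc k) m (Suc j))\<^sup>2)"
    unfolding T_def by (intro mult_left_mono sum_mixed_norm_Cons_sq_le) simp
  finally show ?thesis by (simp add: p_def e_def mult.assoc)
qed

text \<open>The inductive step of Blei's inequality: split off the first index, interpolate between
  \<open>\<ell>\<^sup>2\<close> and \<open>\<ell>\<^sup>p\<close> in the remaining ones, and apply Hoelder's inequality in the first index.\<close>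
lemma blei_step:
  fixes k :: nat and C :: real
  assumes "k \<ge> 1" "C \<ge> 0" "\<And>I. b I \<ge> 0"
    and IH: "\<And>b'. (\<And>I. b' I \<ge> 0) \<Longrightarrow> (\<Sum>I\<in>index_tuples k m. b' I powr (2 * real k / (real k + 1)))
          \<le> C * (\<Sum>j<k. mixed_norm b' k m j) powr (2 * real k / (real k + 1))"
  shows "(\<Sum>I\<in>index_tuples (Suc k) m. b I powr (2 * (real k + 1) / (real k + 2)))
       \<le> (C powr ((real k + 1) / real k) * real k) powr (real k / (real k + 2))
         * (\<Sum>j<Suc k. mixed_norm b (Suc k) m j) powr (2 * (real k + 1) / (real k + 2))"
proof -
  define p where "p = 2 * real k / (real k + 1)"
  define e where "e = (real k + 1) / real k"
  define \<alpha> where "\<alpha> = 2 / (real k + 2)"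
  define \<beta> where "\<beta> = real k / (real k + 2)"
  have exps: "e * \<beta> = (real k + 1) / (real k + 2)" "\<alpha> + \<beta> = 1"
    "\<alpha> + 2 * \<beta> = 2 * (real k + 1) / (real k + 2)"
    using assms(1) by (simp add: e_def \<beta>_def,
        simp_all add: \<alpha>_def \<beta>_def add_divide_distrib[symmetric] algebra_simps)
  have pos: "\<alpha> > 0" "\<beta> > 0" using assms(1) by (auto simp: \<alpha>_def \<beta>_def)
  define A where "A i = sqrt (\<Sum>I\<in>index_tuples k m. (b (i # I))\<^sup>2)" for i
  define P where "P i = (\<Sum>I\<in>index_tuples k m. b (i # I) powr p)" for i
  define N where "N = (\<Sum>j<Suc k. mixed_norm b (Suc k) m j)"
  have A_nonneg: "A i \<ge> 0" for i by (simp add: A_def sum_nonneg)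
  have N_split: "N = (\<Sum>i<m. A i) + (\<Sum>j<k. mixed_norm b (Suc k) m (Suc j))"
    unfolding N_def sum.lessThan_Suc_shift mixed_norm_Suc_0 A_def ..
  have "(\<Sum>I\<in>index_tuples (Suc k) m. b I powr (2 * (real k + 1) / (real k + 2)))
      \<le> (\<Sum>i<m. A i powr \<alpha> * P i powr ((real k + 1) / (real k + 2)))"
    unfolding sum_index_tuples_Suc A_def P_def p_def \<alpha>_def
    by (intro sum_mono sum_powr_interpolation) (simp_all add: assms(3))
  also have "\<dots> = (\<Sum>i<m. A i powr \<alpha> * (P i powr e) powr \<beta>)"
    by (simp add: powr_powr exps(1))
  also have "\<dots> \<le> (\<Sum>i<m. A i) powr \<alpha> * (\<Sum>i<m. P i powr e) powr \<beta>"
    by (rule Holder_inequality_sum) (use pos exps A_nonneg in auto)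
  also have "\<dots> \<le> N powr \<alpha> * (C powr e * real k * N\<^sup>2) powr \<beta>"
  proof (intro mult_mono powr_mono2)
    have "(\<Sum>i<m. P i powr e) \<le> C powr e * real k * (\<Sum>j<k. mixed_norm b (Suc k) m (Suc j))\<^sup>2"
      unfolding P_def p_def e_def by (rule sum_powr_Cons_le[OF assms])
    also have "\<dots> \<le> C powr e * real k * N\<^sup>2"
      unfolding N_split by (intro mult_left_mono power_mono) (auto simp: sum_nonneg mixed_norm_nonneg A_nonneg)
    finally show "(\<Sum>i<m. P i powr e) \<le> C powr e * real k * N\<^sup>2" .
  qed (use pos A_nonneg N_split in \<open>auto simp: sum_nonneg mixed_norm_nonneg\<close>)
  also have "\<dots> = (C powr e * real k) powr \<beta> * N powr (\<alpha> + 2 * \<beta>)"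
    using mixed_norm_nonneg by (simp add: N_def powr_mult powr_sq powr_add sum_nonneg)
  also have "\<alpha> + 2 * \<beta> = 2 * (real k + 1) / (real k + 2)" by (rule exps(3))
  finally show ?thesis by (simp add: e_def \<beta>_def N_def)
qed

theorem blei_inequality:
  assumes "k \<ge> 1"
  shows "\<exists>C\<ge>0. \<forall>m b. (\<forall>I. b I \<ge> 0) \<longrightarrow> (\<Sum>I\<in>index_tuples k m. b I powr (2 * real k / (real k + 1)))
          \<le> C * (\<Sum>j<k. mixed_norm b k m j) powr (2 * real k / (real k + 1))"
  using assms
proof (induction k rule: nat_induct_at_least)
  case base
  have "(\<Sum>I\<in>index_tuples 1 m. b I powr 1) = (\<Sum>j<1. mixed_norm b 1 m j) powr 1" if "\<forall>I. b I \<ge> 0" for m b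
  proof -
    have "index_tuples 0 m = {[]}" by (auto simp: index_tuples_def)
    then show ?thesis
      using sum_index_tuples_Suc[of "\<lambda>I. b I powr 1" 0 m] mixed_norm_Suc_0[of b 0 m] that
      by (simp add: sum_nonneg)
  qed
  then show ?case by (intro exI[of _ 1]) simp
next
  case (Suc k)
  then obtain C where "C \<ge> 0" and C: "\<forall>m b. (\<forall>I. b I \<ge> 0) \<longrightarrow> (\<Sum>I\<in>index_tuples k m. b I powr (2 * real k / (real k + 1)))
      \<le> C * (\<Sum>j<k. mixed_norm b k m j) powr (2 * real k / (real k + 1))" by blast
  have "2 * real (Suc k) / (real (Suc k) + 1) = 2 * (real k + 1) / (real k + 2)"
    by (simp add: algebra_simps)
  then show ?case
    using blei_step[OF Suc.hyps \<open>C \<ge> 0\<close>] C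
    by (intro exI[of _ "(C powr ((real k + 1) / real k) * real k) powr (real k / (real k + 2))"]) auto
qed

section \<open>The Bohnenblust--Hille inequality on the Boolean cube\<close>

lemma sum_subsets_le_sum_index_tuples:
  fixes F :: "nat set \<Rightarrow> real"
  assumes "\<And>S. F S \<ge> 0"
  shows "(\<Sum>S | S \<subseteq> {0..<m} \<and> card S = k. F S) \<le> (\<Sum>I\<in>index_tuples k m. F (set I))"
proof -
  define X where "X = {S. S \<subseteq> {0..<m} \<and> card S = k}"
  have fin: "finite S" if "S \<in> X" for S using that finite_subset by (auto simp: X_def)
  have inj: "inj_on sorted_list_of_set X"
    by (rule inj_on_inverseI[where g = set]) (simp add: fin)
  have "sorted_list_of_set ` X \<subseteq> index_tuples k m"
  proof
    fix I assume "I \<in> sorted_list_of_set ` X"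
    then obtain S where "S \<in> X" "I = sorted_list_of_set S" by blast
    then show "I \<in> index_tuples k m" using fin[of S] by (simp add: X_def index_tuples_def)
  qed
  then have "(\<Sum>I\<in>sorted_list_of_set ` X. F (set I)) \<le> (\<Sum>I\<in>index_tuples k m. F (set I))"
    using assms by (intro sum_mono2) auto
  moreover have "(\<Sum>I\<in>sorted_list_of_set ` X. F (set I)) = (\<Sum>S\<in>X. F S)"
    unfolding sum.reindex[OF inj] by (intro sum.cong) (simp_all add: fin)
  ultimately show ?thesis by (simp add: X_def)
qed

lemma sum_index_tuples_nth_le:
  fixes F :: "nat set \<Rightarrow> real"
  assumes "\<And>S. F S \<ge> 0" "\<And>S. S \<subseteq> {0..<m} \<Longrightarrow> card S \<noteq> k \<Longrightarrow> F S = 0" "j < k"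
  shows "(\<Sum>I | I \<in> index_tuples k m \<and> I ! j = t. F (set I))
       \<le> real k ^ k * (\<Sum>S | S \<subseteq> {0..<m} \<and> t \<in> S. F S)"
proof -
  define X where "X = {I. I \<in> index_tuples k m \<and> I ! j = t}"
  define Y where "Y = {S. S \<subseteq> {0..<m} \<and> t \<in> S}"
  have "set ` X \<subseteq> Y" using assms(3) by (auto simp: X_def Y_def index_tuples_def)
  then have "(\<Sum>I\<in>X. F (set I)) = (\<Sum>S\<in>Y. \<Sum>I | I \<in> X \<and> set I = S. F (set I))"
    by (intro sum.group[symmetric]) (auto simp: X_def Y_def)
  also have "\<dots> \<le> (\<Sum>S\<in>Y. real k ^ k * F S)"
  proof (intro sum_mono)
    fix S assume S: "S \<in> Y"
    show "(\<Sum>I | I \<in> X \<and> set I = S. F (set I)) \<le> real k ^ k * F S"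
    proof (cases "card S = k")
      case True
      have "finite S" using S finite_subset by (auto simp: Y_def)
      then have "card {I. I \<in> X \<and> set I = S} \<le> card {I. set I \<subseteq> S \<and> length I = k}"
        by (intro card_mono finite_lists_length_eq) (auto simp: X_def index_tuples_def)
      also have "\<dots> = k ^ k" using card_lists_length_eq[OF \<open>finite S\<close>] True by simp
      finally have "real (card {I. I \<in> X \<and> set I = S}) \<le> real k ^ k" by (simp flip: of_nat_power)
      then show ?thesis using assms(1) by (simp add: mult_right_mono)
    qed (use S assms(2) in \<open>simp add: Y_def\<close>)
  qed
  finally show ?thesis by (simp add: X_def Y_def sum_distrib_left)
qed

lemma sum_mixed_norm_le:
  assumes "homogeneous a m k"
  shows "(\<Sum>j<k. mixed_norm (\<lambda>I. cmod (a (set I))) k m j)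
       \<le> real k * sqrt (real k ^ k) * (\<Sum>t<m. sqrt (\<Sum>S | S \<subseteq> {0..<m} \<and> t \<in> S. (cmod (a S))\<^sup>2))"
proof -
  have "mixed_norm (\<lambda>I. cmod (a (set I))) k m j
      \<le> sqrt (real k ^ k) * (\<Sum>t<m. sqrt (\<Sum>S | S \<subseteq> {0..<m} \<and> t \<in> S. (cmod (a S))\<^sup>2))"
    if "j < k" for j
  proof -
    have "mixed_norm (\<lambda>I. cmod (a (set I))) k m j
        \<le> (\<Sum>t<m. sqrt (real k ^ k) * sqrt (\<Sum>S | S \<subseteq> {0..<m} \<and> t \<in> S. (cmod (a S))\<^sup>2))"
      unfolding mixed_norm_def real_sqrt_mult[symmetric] using assms that
      by (intro sum_mono real_sqrt_le_mono sum_index_tuples_nth_le) (auto simp: homogeneous_def)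
    then show ?thesis by (simp add: sum_distrib_left)
  qed
  then have "(\<Sum>j<k. mixed_norm (\<lambda>I. cmod (a (set I))) k m j)
      \<le> (\<Sum>j<k. sqrt (real k ^ k) * (\<Sum>t<m. sqrt (\<Sum>S | S \<subseteq> {0..<m} \<and> t \<in> S. (cmod (a S))\<^sup>2)))"
    by (intro sum_mono) auto
  then show ?thesis by (simp add: mult.assoc)
qed

theorem bohnenblust_hille_homogeneous:
  assumes "k \<ge> 1"
  shows "\<exists>H\<ge>0. \<forall>m a. homogeneous a m k \<longrightarrow>
     (\<Sum>S | S \<subseteq> {0..<m} \<and> card S = k. cmod (a S) powr (2 * real k / (real k + 1)))
       \<le> (H * sup_norm a m) powr (2 * real k / (real k + 1))"
proof -
  define p where "p = 2 * real k / (real k + 1)"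
  have p: "p > 0" using assms by (simp add: p_def)
  obtain B where "B \<ge> 0" and B: "\<And>m b. (\<forall>I. b I \<ge> 0) \<Longrightarrow>
      (\<Sum>I\<in>index_tuples k m. b I powr p) \<le> B * (\<Sum>j<k. mixed_norm b k m j) powr p"
    using blei_inequality[OF assms] unfolding p_def by blast
  obtain D where "D \<ge> 0" and D: "\<And>m a x. homogeneous a m k \<Longrightarrow> x \<in> cube m \<Longrightarrow>
      (\<Sum>t<m. cmod (fourier_sum (deriv_coeffs a t) m x)) \<le> D * sup_norm a m"
    using sum_norm_deriv_le_sup_norm[of k] by blast
  define H where "H = B powr (1 / p) * (real k * sqrt (real k ^ k) * (3 ^ k * D))"
  have "(\<Sum>S | S \<subseteq> {0..<m} \<and> card S = k. cmod (a S) powr p) \<le> (H * sup_norm a m) powr p"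
    if a: "homogeneous a m k" for m a
  proof -
    have "(\<Sum>S | S \<subseteq> {0..<m} \<and> card S = k. cmod (a S) powr p)
        \<le> (\<Sum>I\<in>index_tuples k m. cmod (a (set I)) powr p)"
      by (rule sum_subsets_le_sum_index_tuples) simp
    also have "\<dots> \<le> B * (\<Sum>j<k. mixed_norm (\<lambda>I. cmod (a (set I))) k m j) powr p"
      by (rule B) simp
    also have "\<dots> \<le> B * (real k * sqrt (real k ^ k) * (3 ^ k * D * sup_norm a m)) powr p"
    proof -
      have "(\<Sum>j<k. mixed_norm (\<lambda>I. cmod (a (set I))) k m j)
          \<le> real k * sqrt (real k ^ k) * (3 ^ k * D * sup_norm a m)"
        using sum_mixed_norm_le[OF a] sum_L2_deriv_le_sup_norm[OF a D[OF a]]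
        by (meson mult_left_mono order_trans mult_nonneg_nonneg of_nat_0_le_iff real_sqrt_ge_zero zero_le_power)
      then show ?thesis
        using p \<open>B \<ge> 0\<close> by (intro mult_left_mono powr_mono2) (auto intro!: sum_nonneg mixed_norm_nonneg)
    qed
    also have "\<dots> = (H * sup_norm a m) powr p"
      using p \<open>B \<ge> 0\<close> \<open>D \<ge> 0\<close> sup_norm_nonneg[of a m]
      by (simp add: H_def powr_mult powr_powr mult_ac)
    finally show ?thesis .
  qed
  moreover have "H \<ge> 0" using \<open>D \<ge> 0\<close> by (simp add: H_def)
  ultimately show ?thesis unfolding p_def by blast
qed

lemma sum_powr_le_powr_sum_powr:
  fixes f :: "'i \<Rightarrow> real"
  assumes "finite A" "\<And>x. f x \<ge> 0" "0 < p" "p \<le> q"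
  shows "(\<Sum>x\<in>A. f x powr q) \<le> (\<Sum>x\<in>A. f x powr p) powr (q / p)"
proof -
  define N where "N = (\<Sum>x\<in>A. f x powr p)"
  have "f x powr (q - p) \<le> N powr ((q - p) / p)" if "x \<in> A" for x
  proof -
    have "f x powr p \<le> N" unfolding N_def using that assms by (intro member_le_sum) auto
    then have "(f x powr p) powr ((q - p) / p) \<le> N powr ((q - p) / p)"
      using assms by (intro powr_mono2) auto
    then show ?thesis using assms by (simp add: powr_powr)
  qed
  then have "(\<Sum>x\<in>A. f x powr p * f x powr (q - p)) \<le> (\<Sum>x\<in>A. f x powr p * N powr ((q - p) / p))"
    by (intro sum_mono mult_left_mono) auto
  moreover have "N * N powr ((q - p) / p) = N powr (q / p)"
  proof -
    have "N \<ge> 0" unfolding N_def by (simp add: sum_nonneg)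
    then have "N * N powr ((q - p) / p) = N powr (1 + (q - p) / p)" by (simp add: powr_add)
    also have "1 + (q - p) / p = q / p" using assms(3) by (simp add: field_simps)
    finally show ?thesis .
  qed
  ultimately show ?thesis
    by (simp add: N_def sum_distrib_right flip: powr_add)
qed

lemma bohnenblust_hille_homogeneous_uniform:
  "\<exists>H\<ge>1. \<forall>k\<in>{1..d}. \<forall>m a. homogeneous a m k \<longrightarrow>
     (\<Sum>S | S \<subseteq> {0..<m} \<and> card S = k. cmod (a S) powr (2 * real k / (real k + 1)))
       \<le> (H * sup_norm a m) powr (2 * real k / (real k + 1))"
proof -
  have "\<forall>k\<in>{1..d}. \<exists>H. H \<ge> 0 \<and> (\<forall>m a. homogeneous a m k \<longrightarrow>
     (\<Sum>S | S \<subseteq> {0..<m} \<and> card S = k. cmod (a S) powr (2 * real k / (real k + 1)))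
       \<le> (H * sup_norm a m) powr (2 * real k / (real k + 1)))"
    using bohnenblust_hille_homogeneous by auto
  from bchoice[OF this] obtain Hk where Hk: "\<forall>k\<in>{1..d}. Hk k \<ge> 0 \<and> (\<forall>m a. homogeneous a m k \<longrightarrow>
     (\<Sum>S | S \<subseteq> {0..<m} \<and> card S = k. cmod (a S) powr (2 * real k / (real k + 1)))
       \<le> (Hk k * sup_norm a m) powr (2 * real k / (real k + 1)))"
    by blast
  define H where "H = 1 + (\<Sum>k\<in>{1..d}. Hk k)"
  have "(Hk k * sup_norm a m) powr (2 * real k / (real k + 1)) \<le> (H * sup_norm a m) powr (2 * real k / (real k + 1))"
    if "k \<in> {1..d}" for k m a
  proof -
    have "Hk k \<le> (\<Sum>k\<in>{1..d}. Hk k)" using Hk that by (intro member_le_sum) auto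
    then have "Hk k \<le> H" by (simp add: H_def)
    then show ?thesis
      using Hk that sup_norm_nonneg[of a m] by (intro powr_mono2 mult_right_mono) auto
  qed
  moreover have "H \<ge> 1" unfolding H_def using Hk by (auto intro!: sum_nonneg)
  ultimately show ?thesis using Hk by (intro exI[of _ H]) (blast intro: order_trans)
qed

lemma sum_subsets_card_le:
  fixes m :: nat
  shows "(\<Sum>S | S \<subseteq> {0..<m} \<and> card S \<le> d. F S) = (\<Sum>k\<le>d. \<Sum>S | S \<subseteq> {0..<m} \<and> card S = k. F S)"
proof -
  have "finite {S. S \<subseteq> {0..<m} \<and> card S \<le> d}"
    by (rule finite_subset[of _ "Pow {0..<m}"]) auto
  then have "(\<Sum>S | S \<subseteq> {0..<m} \<and> card S \<le> d. F S)
      = (\<Sum>k\<le>d. \<Sum>S | S \<in> {S. S \<subseteq> {0..<m} \<and> card S \<le> d} \<and> card S = k. F S)"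
    by (rule sum.group[symmetric]) auto
  then show ?thesis by (auto intro!: sum.cong)
qed

lemma sum_powr_level_le_homogeneous_part:
  assumes "1 \<le> k" "k \<le> d" "H \<ge> 0"
    and H: "\<And>a. homogeneous a m k \<Longrightarrow>
      (\<Sum>S | S \<subseteq> {0..<m} \<and> card S = k. cmod (a S) powr (2 * real k / (real k + 1)))
        \<le> (H * sup_norm a m) powr (2 * real k / (real k + 1))"
  shows "(\<Sum>S | S \<subseteq> {0..<m} \<and> card S = k. cmod (a S) powr (2 * real d / (real d + 1)))
       \<le> (H * sup_norm (homogeneous_part a k) m) powr (2 * real d / (real d + 1))"
proof -
  define p where "p = 2 * real d / (real d + 1)"
  define pk where "pk = 2 * real k / (real k + 1)"
  have pk: "0 < pk" "pk \<le> p" using assms(1,2) by (auto simp: p_def pk_def field_simps)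
  have fin: "finite {S. S \<subseteq> {0..<m} \<and> card S = k}"
    by (rule finite_subset[of _ "Pow {0..<m}"]) auto
  have eq: "(\<Sum>S | S \<subseteq> {0..<m} \<and> card S = k. cmod (a S) powr pk)
      = (\<Sum>S | S \<subseteq> {0..<m} \<and> card S = k. cmod (homogeneous_part a k S) powr pk)"
    by (intro sum.cong) (auto simp: homogeneous_part_def)
  have "(\<Sum>S | S \<subseteq> {0..<m} \<and> card S = k. cmod (a S) powr p)
      \<le> (\<Sum>S | S \<subseteq> {0..<m} \<and> card S = k. cmod (a S) powr pk) powr (p / pk)"
    using sum_powr_le_powr_sum_powr[OF fin, of "\<lambda>S. cmod (a S)" pk p] pk by simp
  also have "\<dots> \<le> ((H * sup_norm (homogeneous_part a k) m) powr pk) powr (p / pk)"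
    unfolding eq using H[OF homogeneous_homogeneous_part[of a k m]] pk
    by (intro powr_mono2) (auto simp: pk_def sum_nonneg)
  also have "\<dots> = (H * sup_norm (homogeneous_part a k) m) powr p"
    using pk assms(3) sup_norm_nonneg by (simp add: powr_powr)
  finally show ?thesis by (simp add: p_def)
qed

lemma sum_powr_level_le:
  assumes "k \<le> d" "K \<ge> 0" "H \<ge> 1"
    and K: "\<And>j. sup_norm (homogeneous_part a j) m \<le> K * sup_norm a m"
    and H: "\<And>k a. k \<in> {1..d} \<Longrightarrow> homogeneous a m k \<Longrightarrow>
      (\<Sum>S | S \<subseteq> {0..<m} \<and> card S = k. cmod (a S) powr (2 * real k / (real k + 1)))
        \<le> (H * sup_norm a m) powr (2 * real k / (real k + 1))"
  shows "(\<Sum>S | S \<subseteq> {0..<m} \<and> card S = k. cmod (a S) powr (2 * real d / (real d + 1)))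
       \<le> (H * K * sup_norm a m) powr (2 * real d / (real d + 1))"
proof -
  have "0 \<le> K * sup_norm a m" using assms(2) sup_norm_nonneg[of a m] by simp
  then have "K * sup_norm a m \<le> H * (K * sup_norm a m)"
    using mult_right_mono[OF assms(3)] by fastforce
  then have HK: "sup_norm (homogeneous_part a j) m \<le> H * K * sup_norm a m" for j
    using K[of j] by (simp add: mult.assoc)
  show ?thesis
  proof (cases "k = 0")
    case True
    then have "{S. S \<subseteq> {0..<m} \<and> card S = k} = {{}}" by (auto simp: finite_subset)
    moreover obtain z where "z \<in> cube m" using cube_nonempty by blast
    then have "cmod (a {}) \<le> H * K * sup_norm a m"
      using norm_fourier_sum_le_sup_norm HK[of 0] order_trans by (metis fourier_sum_homogeneous_part_0)
    ultimately show ?thesis by (simp add: powr_mono2)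
  next
    case False
    then have "(\<Sum>S | S \<subseteq> {0..<m} \<and> card S = k. cmod (a S) powr (2 * real d / (real d + 1)))
        \<le> (H * sup_norm (homogeneous_part a k) m) powr (2 * real d / (real d + 1))"
      using assms(1,3) H by (intro sum_powr_level_le_homogeneous_part) auto
    also have "\<dots> \<le> (H * K * sup_norm a m) powr (2 * real d / (real d + 1))"
    proof (rule powr_mono2)
      show "H * sup_norm (homogeneous_part a k) m \<le> H * K * sup_norm a m"
        using assms(3) K[of k] by (simp add: mult.assoc mult_left_mono)
    qed (use assms(3) sup_norm_nonneg[of "homogeneous_part a k" m] in auto)
    finally show ?thesis .
  qed
qed

theorem bohnenblust_hille_boolean:
  assumes "d \<ge> 1"
  shows "\<exists>C\<ge>0. \<forall>m a. degree_le a m d \<longrightarrow>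
     (\<Sum>S | S \<subseteq> {0..<m} \<and> card S \<le> d. cmod (a S) powr (2 * real d / (real d + 1)))
       powr ((real d + 1) / (2 * real d)) \<le> C * sup_norm a m"
proof -
  define p where "p = 2 * real d / (real d + 1)"
  have p: "p > 0" "(real d + 1) / (2 * real d) = 1 / p" using assms by (auto simp: p_def)
  obtain K where K: "K \<ge> 0" "\<And>m a j. degree_le a m d \<Longrightarrow> sup_norm (homogeneous_part a j) m \<le> K * sup_norm a m"
    using sup_norm_homogeneous_part_le[of d] by blast
  obtain H where H: "H \<ge> 1" "\<And>k m a. k \<in> {1..d} \<Longrightarrow> homogeneous a m k \<Longrightarrow>
      (\<Sum>S | S \<subseteq> {0..<m} \<and> card S = k. cmod (a S) powr (2 * real k / (real k + 1)))
        \<le> (H * sup_norm a m) powr (2 * real k / (real k + 1))"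
    using bohnenblust_hille_homogeneous_uniform[of d] by blast
  define C where "C = (real d + 1) powr (1 / p) * (H * K)"
  have "(\<Sum>S | S \<subseteq> {0..<m} \<and> card S \<le> d. cmod (a S) powr p) powr (1 / p) \<le> C * sup_norm a m"
    if a: "degree_le a m d" for m a
  proof -
    define M where "M = H * K * sup_norm a m"
    have "M \<ge> 0" using H(1) K(1) sup_norm_nonneg[of a m] by (simp add: M_def)
    have "(\<Sum>S | S \<subseteq> {0..<m} \<and> card S \<le> d. cmod (a S) powr p) \<le> (\<Sum>k\<le>d. M powr p)"
      unfolding sum_subsets_card_le M_def p_def
      using sum_powr_level_le[OF _ K(1) H(1) K(2)[OF a] H(2)] by (intro sum_mono) auto
    also have "\<dots> = (real d + 1) * M powr p" by (simp add: add.commute)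
    finally have "(\<Sum>S | S \<subseteq> {0..<m} \<and> card S \<le> d. cmod (a S) powr p) powr (1 / p)
        \<le> ((real d + 1) * M powr p) powr (1 / p)"
      using p by (intro powr_mono2) (auto simp: sum_nonneg)
    also have "\<dots> = C * sup_norm a m"
      using p \<open>M \<ge> 0\<close> K(1) H(1) sup_norm_nonneg[of a m]
      by (simp add: C_def M_def powr_mult powr_powr mult_ac)
    finally show ?thesis .
  qed
  moreover have "C \<ge> 0" using H(1) K(1) by (simp add: C_def)
  ultimately show ?thesis by (auto simp: p_def)
qed

lemma sup_norm_eq_Max: "sup_norm a m = Max ((\<lambda>x. cmod (\<Sum>S\<in>Pow {0..<m}. a S * chi S x)) ` cube m)"
  by (simp add: sup_norm_def fourier_sum_def)

lemma BH_consts_nonempty: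
  assumes "d \<ge> 1"
  shows "BH_consts d \<noteq> {}"
proof -
  obtain C where "C \<ge> 0" and C: "\<And>m a. degree_le a m d \<Longrightarrow>
      (\<Sum>S | S \<subseteq> {0..<m} \<and> card S \<le> d. cmod (a S) powr (2 * real d / (real d + 1)))
        powr ((real d + 1) / (2 * real d)) \<le> C * sup_norm a m"
    using bohnenblust_hille_boolean[OF assms] by blast
  have "C \<in> BH_consts d"
    unfolding BH_consts_def using \<open>C \<ge> 0\<close> C by (auto simp: degree_le_def sup_norm_eq_Max)
  then show ?thesis by blast
qed

lemma BH_constsD:
  assumes "B \<in> BH_consts d" "m \<ge> 1" "\<forall>S. card S > d \<longrightarrow> g S = 0"
  shows "(\<Sum>S\<in>{S. S \<subseteq> {0..<m} \<and> card S \<le> d}. cmod (g S) powr (2 * real d / (real d + 1)))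
           powr ((real d + 1) / (2 * real d))
       \<le> B * Max ((\<lambda>x. cmod (\<Sum>S\<in>Pow {0..<m}. g S * chi S x)) ` cube m)"
  using assms unfolding BH_consts_def by blast

lemma BH_consts_ge_1:
  assumes "B \<in> BH_consts d"
  shows "B \<ge> 1"
proof -
  define g :: "nat set \<Rightarrow> complex" where "g S = (if S = {} then 1 else 0)" for S
  have "finite {S. S \<subseteq> {0..<1::nat} \<and> card S \<le> d}"
    by (rule finite_subset[of _ "Pow {0..<1}"]) auto
  moreover have "(\<Sum>S | S \<subseteq> {0..<1} \<and> card S \<le> d. cmod (g S) powr (2 * real d / (real d + 1)))
      = (\<Sum>S | S \<subseteq> {0..<1::nat} \<and> card S \<le> d. if S = {} then 1 else 0)"
    by (intro sum.cong) (auto simp: g_def)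
  ultimately have "(\<Sum>S | S \<subseteq> {0..<1} \<and> card S \<le> d. cmod (g S) powr (2 * real d / (real d + 1))) = 1"
    by (simp add: sum.delta)
  moreover have "(\<Sum>S\<in>Pow {0..<1}. g S * chi S x) = 1" for x
  proof -
    have "(\<Sum>S\<in>Pow {0..<1}. g S * chi S x) = (\<Sum>S\<in>Pow {0..<1::nat}. if S = {} then 1 else 0)"
      by (intro sum.cong) (auto simp: g_def chi_def)
    then show ?thesis by (simp add: sum.delta)
  qed
  then have "(\<lambda>x. cmod (\<Sum>S\<in>Pow {0..<1}. g S * chi S x)) ` cube 1 = {1}"
    using cube_nonempty[of 1] by auto
  moreover have "\<forall>S. d < card S \<longrightarrow> g S = 0" by (simp add: g_def)
  ultimately show ?thesis using BH_constsD[OF assms, of 1 g] by simp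
qed

lemma BH_in_BH_consts:
  assumes "d \<ge> 1"
  shows "BH d \<in> BH_consts d"
proof -
  have ne: "BH_consts d \<noteq> {}" by (rule BH_consts_nonempty[OF assms])
  have bdd: "bdd_below (BH_consts d)" using BH_consts_ge_1 by (intro bdd_belowI)
  have "BH d \<ge> 1" unfolding BH_def using ne BH_consts_ge_1 by (intro cInf_greatest) auto
  have le_BH: "L \<le> BH d * M" if "M \<ge> 0" and L: "\<And>B. B \<in> BH_consts d \<Longrightarrow> L \<le> B * M" for L M
  proof (cases "M = 0")
    case True
    then show ?thesis using L ne by auto
  next
    case False
    then have "L / M \<le> BH d"
      unfolding BH_def using ne L \<open>M \<ge> 0\<close> by (intro cInf_greatest) (auto simp: divide_le_eq)
    then show ?thesis using False \<open>M \<ge> 0\<close> by (simp add: divide_le_eq mult.commute)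
  qed
  show ?thesis
    unfolding BH_consts_def mem_Collect_eq
  proof (intro conjI allI impI le_BH)
    fix m :: nat and g :: "nat set \<Rightarrow> complex"
    show "0 \<le> Max ((\<lambda>x. cmod (\<Sum>S\<in>Pow {0..<m}. g S * chi S x)) ` cube m)"
      using sup_norm_nonneg[of g m] by (simp add: sup_norm_eq_Max)
  qed (use \<open>BH d \<ge> 1\<close> BH_constsD in auto)
qed

section \<open>Pauli expansions and product states\<close>

text \<open>An eigenvector of \<open>\<sigma>\<^sub>k\<close>, \<open>k \<in> {1,2,3}\<close>, with eigenvalue \<open>bool_sign \<beta>\<close>.\<close>
definition pauli_eigvec :: "nat \<Rightarrow> bool \<Rightarrow> bool \<Rightarrow> complex" where
  "pauli_eigvec k \<beta> b =
     (if k = 3 then (if b = \<beta> then 0 else 1)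
      else if k = 1 then (if b then (if \<beta> then 1 else -1) else 1) / complex_of_real (sqrt 2)
      else (if b then (if \<beta> then \<i> else -\<i>) else 1) / complex_of_real (sqrt 2))"

lemma pauli_eigvec_expectation:
  assumes "k \<in> {1, 2, 3}" "s \<in> {0, 1, 2, 3}"
  shows "(\<Sum>a\<in>UNIV. \<Sum>b\<in>UNIV. cnj (pauli_eigvec k \<beta> a) * pauli s a b * pauli_eigvec k \<beta> b)
       = (if s = 0 then 1 else if s = k then complex_of_real (bool_sign \<beta>) else 0)"
proof -
  have "complex_of_real (sqrt 2) * complex_of_real (sqrt 2) = 2"
    by (simp flip: of_real_mult)
  then show ?thesis
    using assms by (auto simp: UNIV_bool pauli_eigvec_def pauli_def bool_sign_def field_simps)
qed

lemma sum_norm_sq_pauli_eigvec: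
  assumes "k \<in> {1, 2, 3}"
  shows "(cmod (pauli_eigvec k \<beta> True))\<^sup>2 + (cmod (pauli_eigvec k \<beta> False))\<^sup>2 = 1"
  using assms by (auto simp: pauli_eigvec_def norm_divide power_divide)

text \<open>The Pauli factor \<open>\<sigma>\<^sub>k\<close> on qubit \<open>j\<close> corresponds to the coordinate \<open>3j + k - 1\<close> of the cube
  \<open>{-1, 1}\<^sup>3\<^sup>n\<close>.\<close>
definition axis_coord :: "nat \<Rightarrow> nat \<Rightarrow> nat" where
  "axis_coord j k = 3 * j + (k - 1)"

definition pauli_support :: "nat list \<Rightarrow> nat set" where
  "pauli_support s = {j. j < length s \<and> s ! j \<noteq> 0}"

definition pauli_embed :: "nat list \<Rightarrow> nat set" where
  "pauli_embed s = (\<lambda>j. axis_coord j (s ! j)) ` pauli_support s"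

lemma axis_coord_eq_iff:
  assumes "k \<in> {1, 2, 3}" "k' \<in> {1, 2, 3}"
  shows "axis_coord j k = axis_coord j' k' \<longleftrightarrow> j = j' \<and> k = k'"
  using assms unfolding axis_coord_def by (auto; presburger)

lemma pwords_nth: "s \<in> pwords n \<Longrightarrow> j < n \<Longrightarrow> s ! j \<in> {0, 1, 2, 3}"
  unfolding pwords_def using nth_mem by blast

lemma length_pwords: "s \<in> pwords n \<Longrightarrow> length s = n"
  by (simp add: pwords_def)

lemma finite_pwords [simp]: "finite (pwords n)"
  using finite_lists_length_eq[of "{0::nat, 1, 2, 3}" n] by (simp add: pwords_def conj_commute)

lemma pwords_nth_nonzero: "s \<in> pwords n \<Longrightarrow> j \<in> pauli_support s \<Longrightarrow> s ! j \<in> {1, 2, 3}"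
  using pwords_nth length_pwords by (fastforce simp: pauli_support_def)

lemma inj_on_axis_coord_support:
  assumes "s \<in> pwords n"
  shows "inj_on (\<lambda>j. axis_coord j (s ! j)) (pauli_support s)"
proof (rule inj_onI)
  fix i j assume "i \<in> pauli_support s" "j \<in> pauli_support s" "axis_coord i (s ! i) = axis_coord j (s ! j)"
  then show "i = j" using axis_coord_eq_iff pwords_nth_nonzero[OF assms] by blast
qed

lemma card_pauli_embed:
  assumes "s \<in> pwords n"
  shows "card (pauli_embed s) = pweight s"
  using card_image[OF inj_on_axis_coord_support[OF assms]]
  by (simp add: pauli_embed_def pweight_def pauli_support_def)

lemma pauli_embed_subset: "s \<in> pwords n \<Longrightarrow> pauli_embed s \<subseteq> {0..<3 * n}"
  using pwords_nth_nonzero length_pwords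
  by (fastforce simp: pauli_embed_def pauli_support_def axis_coord_def)

lemma axis_coord_mem_pauli_embed_iff:
  assumes "s \<in> pwords n" "j < n" "k \<in> {1, 2, 3}"
  shows "axis_coord j k \<in> pauli_embed s \<longleftrightarrow> s ! j = k"
proof
  assume "axis_coord j k \<in> pauli_embed s"
  then obtain j' where j': "j' \<in> pauli_support s" "axis_coord j k = axis_coord j' (s ! j')"
    by (auto simp: pauli_embed_def)
  have "s ! j' \<in> {1, 2, 3}" by (rule pwords_nth_nonzero[OF assms(1) j'(1)])
  then show "s ! j = k" using axis_coord_eq_iff[OF assms(3)] j'(2) by simp
next
  assume "s ! j = k"
  then show "axis_coord j k \<in> pauli_embed s"
    using assms length_pwords[OF assms(1)] by (auto simp: pauli_embed_def pauli_support_def)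
qed

lemma inj_on_pauli_embed: "inj_on pauli_embed (pwords n)"
proof (rule inj_onI)
  fix s s' assume s: "s \<in> pwords n" and s': "s' \<in> pwords n" and eq: "pauli_embed s = pauli_embed s'"
  show "s = s'"
  proof (rule nth_equalityI)
    show "length s = length s'" using s s' by (simp add: length_pwords)
    fix j assume "j < length s"
    then have j: "j < n" using s by (simp add: length_pwords)
    have iff: "s ! j = k \<longleftrightarrow> s' ! j = k" if "k \<in> {1, 2, 3}" for k
      using axis_coord_mem_pauli_embed_iff[OF s j that] axis_coord_mem_pauli_embed_iff[OF s' j that] eq
      by simp
    show "s ! j = s' ! j"
    proof (cases "s ! j = 0")
      case True
      show ?thesis
      proof (rule ccontr)
        assume ne: "s ! j \<noteq> s' ! j"
        then have "s' ! j \<in> {1, 2, 3}" using True pwords_nth[OF s' j] by auto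
        then show False using iff ne by blast
      qed
    next
      case False
      then have "s ! j \<in> {1, 2, 3}" using pwords_nth[OF s j] by auto
      then show ?thesis using iff by blast
    qed
  qed
qed

text \<open>The coefficients of the function on \<open>{-1, 1}\<^sup>3\<^sup>n\<close> attached to the Pauli expansion
  with coefficients \<open>c\<close>.\<close>
definition classical_coeffs :: "nat \<Rightarrow> (nat list \<Rightarrow> complex) \<Rightarrow> nat set \<Rightarrow> complex" where
  "classical_coeffs n c T =
     (if T \<in> pauli_embed ` pwords n then c (the_inv_into (pwords n) pauli_embed T) / 3 ^ card T else 0)"

lemma classical_coeffs_pauli_embed:
  "s \<in> pwords n \<Longrightarrow> classical_coeffs n c (pauli_embed s) = c s / 3 ^ pweight s"
  unfolding classical_coeffs_def using the_inv_into_f_f[OF inj_on_pauli_embed] card_pauli_embed by auto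

lemma classical_coeffs_eq_0:
  assumes "\<forall>s\<in>pwords n. pweight s > d \<longrightarrow> c s = 0" "card T > d"
  shows "classical_coeffs n c T = 0"
proof (cases "T \<in> pauli_embed ` pwords n")
  case True
  then obtain s where "s \<in> pwords n" "T = pauli_embed s" by blast
  then show ?thesis using assms card_pauli_embed classical_coeffs_pauli_embed by simp
qed (simp add: classical_coeffs_def)

text \<open>The average over the three axes of qubit \<open>j\<close> of the expectation of \<open>\<sigma>\<^bsub>s ! j\<^esub>\<close> in the
  product states below.\<close>
definition axis_average :: "bool list \<Rightarrow> nat list \<Rightarrow> nat \<Rightarrow> complex" where
  "axis_average x s j = (if s ! j = 0 then 1 else complex_of_real (bool_sign (x ! axis_coord j (s ! j))) / 3)"

lemma chi_pauli_embed:
  assumes "s \<in> pwords n"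
  shows "chi (pauli_embed s) x / 3 ^ pweight s = (\<Prod>j<n. axis_average x s j)"
proof -
  have "chi (pauli_embed s) x = (\<Prod>j\<in>pauli_support s. complex_of_real (bool_sign (x ! axis_coord j (s ! j))))"
    unfolding chi_eq_prod_bool_sign pauli_embed_def
    by (simp add: prod.reindex[OF inj_on_axis_coord_support[OF assms]])
  moreover have "pweight s = card (pauli_support s)" by (simp add: pweight_def pauli_support_def)
  moreover have "pauli_support s \<subseteq> {0..<n}" using assms by (auto simp: pauli_support_def length_pwords)
  ultimately have "chi (pauli_embed s) x / 3 ^ pweight s
      = (\<Prod>j<n. if j \<in> pauli_support s then complex_of_real (bool_sign (x ! axis_coord j (s ! j))) / 3 else 1)"
    by (simp add: prod_dividef prod_lessThan_if_mem)
  also have "\<dots> = (\<Prod>j<n. axis_average x s j)"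
    using assms by (intro prod.cong) (auto simp: axis_average_def pauli_support_def length_pwords)
  finally show ?thesis .
qed

lemma fourier_sum_classical_coeffs:
  "fourier_sum (classical_coeffs n c) (3 * n) x = (\<Sum>s\<in>pwords n. c s * (\<Prod>j<n. axis_average x s j))"
proof -
  have "fourier_sum (classical_coeffs n c) (3 * n) x
      = (\<Sum>T\<in>pauli_embed ` pwords n. classical_coeffs n c T * chi T x)"
    unfolding fourier_sum_def using pauli_embed_subset
    by (intro sum.mono_neutral_right) (auto simp: classical_coeffs_def)
  also have "\<dots> = (\<Sum>s\<in>pwords n. c s * (\<Prod>j<n. axis_average x s j))"
    by (simp add: sum.reindex[OF inj_on_pauli_embed] classical_coeffs_pauli_embed
        flip: chi_pauli_embed)
  finally show ?thesis .
qed

definition axis_choices :: "nat \<Rightarrow> nat list set" where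
  "axis_choices n = {\<kappa>. length \<kappa> = n \<and> set \<kappa> \<subseteq> {1, 2, 3}}"

definition product_state :: "bool list \<Rightarrow> nat \<Rightarrow> nat list \<Rightarrow> bool list \<Rightarrow> complex" where
  "product_state x n \<kappa> r = (\<Prod>j<n. pauli_eigvec (\<kappa> ! j) (x ! axis_coord j (\<kappa> ! j)) (r ! j))"

lemma axis_choices_nth: "\<kappa> \<in> axis_choices n \<Longrightarrow> j < n \<Longrightarrow> \<kappa> ! j \<in> {1, 2, 3}"
  unfolding axis_choices_def using nth_mem by blast

lemma axis_choices_eq: "axis_choices n = {\<kappa>. set \<kappa> \<subseteq> {1, 2, 3} \<and> length \<kappa> = n}"
  by (auto simp: axis_choices_def)

lemma finite_axis_choices [simp]: "finite (axis_choices n)"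
  unfolding axis_choices_eq by (rule finite_lists_length_eq) simp

lemma card_axis_choices: "card (axis_choices n) = 3 ^ n"
  unfolding axis_choices_eq by (subst card_lists_length_eq) (simp_all add: numeral_3_eq_3)

lemma sum_cube_cube_prod:
  "(\<Sum>r\<in>cube n. \<Sum>q\<in>cube n. \<Prod>j<n. \<phi> j (r ! j) (q ! j))
   = (\<Prod>j<n. \<Sum>a\<in>UNIV. \<Sum>b\<in>UNIV. (\<phi> j a b :: complex))"
proof -
  have "(\<Sum>r\<in>cube n. \<Sum>q\<in>cube n. \<Prod>j<n. \<phi> j (r ! j) (q ! j))
      = (\<Sum>r\<in>cube n. \<Prod>j<n. \<phi> j (r ! j) True + \<phi> j (r ! j) False)"
    by (intro sum.cong refl) (rule sum_prod_cube)
  also have "\<dots> = (\<Prod>j<n. (\<phi> j True True + \<phi> j True False) + (\<phi> j False True + \<phi> j False False))"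
    by (rule sum_prod_cube)
  finally show ?thesis by (simp add: UNIV_bool algebra_simps)
qed

lemma product_state_expectation:
  assumes s: "s \<in> pwords n" and \<kappa>: "\<kappa> \<in> axis_choices n"
  shows "(\<Sum>r\<in>cube n. \<Sum>q\<in>cube n. cnj (product_state x n \<kappa> r) * pauli_tensor s r q * product_state x n \<kappa> q)
    = (\<Prod>j<n. if s ! j = 0 then 1
              else if s ! j = \<kappa> ! j then complex_of_real (bool_sign (x ! axis_coord j (\<kappa> ! j))) else 0)"
proof -
  define \<phi> where "\<phi> j a b = cnj (pauli_eigvec (\<kappa> ! j) (x ! axis_coord j (\<kappa> ! j)) a) * pauli (s ! j) a b
      * pauli_eigvec (\<kappa> ! j) (x ! axis_coord j (\<kappa> ! j)) b" for j a b
  have "cnj (product_state x n \<kappa> r) * pauli_tensor s r q * product_state x n \<kappa> q = (\<Prod>j<n. \<phi> j (r ! j) (q ! j))"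
    for r q
    unfolding product_state_def pauli_tensor_def \<phi>_def length_pwords[OF s] cnj_prod
    by (simp add: prod.distrib)
  then have "(\<Sum>r\<in>cube n. \<Sum>q\<in>cube n. cnj (product_state x n \<kappa> r) * pauli_tensor s r q * product_state x n \<kappa> q)
      = (\<Prod>j<n. \<Sum>a\<in>UNIV. \<Sum>b\<in>UNIV. \<phi> j a b)"
    by (simp add: sum_cube_cube_prod)
  also have "\<dots> = (\<Prod>j<n. if s ! j = 0 then 1
      else if s ! j = \<kappa> ! j then complex_of_real (bool_sign (x ! axis_coord j (\<kappa> ! j))) else 0)"
    unfolding \<phi>_def
    by (intro prod.cong refl pauli_eigvec_expectation axis_choices_nth[OF \<kappa>] pwords_nth[OF s]) simp_all
  finally show ?thesis .
qed

lemma sum_axis_choices_expectation: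
  assumes "s \<in> pwords n"
  shows "(\<Sum>\<kappa>\<in>axis_choices n. \<Prod>j<n. if s ! j = 0 then 1
            else if s ! j = \<kappa> ! j then complex_of_real (bool_sign (x ! axis_coord j (\<kappa> ! j))) else 0)
       = 3 ^ n * (\<Prod>j<n. axis_average x s j)"
proof -
  have "(\<Sum>\<kappa>\<in>axis_choices n. \<Prod>j<n. if s ! j = 0 then 1
            else if s ! j = \<kappa> ! j then complex_of_real (bool_sign (x ! axis_coord j (\<kappa> ! j))) else 0)
      = (\<Prod>j<n. \<Sum>k\<in>{1, 2, 3}. if s ! j = 0 then 1
            else if s ! j = k then complex_of_real (bool_sign (x ! axis_coord j k)) else 0)"
    unfolding axis_choices_def by (rule sum_prod_lists) simp
  also have "\<dots> = (\<Prod>j<n. 3 * axis_average x s j)"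
  proof (intro prod.cong refl)
    fix j assume "j \<in> {..<n}"
    then have "s ! j \<in> {0, 1, 2, 3}" using pwords_nth[OF assms] by simp
    then show "(\<Sum>k\<in>{1, 2, 3}. if s ! j = 0 then 1
        else if s ! j = k then complex_of_real (bool_sign (x ! axis_coord j k)) else 0) = 3 * axis_average x s j"
      by (auto simp: axis_average_def)
  qed
  finally show ?thesis by (simp add: prod.distrib)
qed

lemma sum_norm_sq_product_state:
  assumes "\<kappa> \<in> axis_choices n"
  shows "(\<Sum>r\<in>cube n. (cmod (product_state x n \<kappa> r))\<^sup>2) = 1"
proof -
  have "(\<Sum>r\<in>cube n. (cmod (product_state x n \<kappa> r))\<^sup>2)
      = (\<Sum>r\<in>cube n. \<Prod>j<n. (cmod (pauli_eigvec (\<kappa> ! j) (x ! axis_coord j (\<kappa> ! j)) (r ! j)))\<^sup>2)"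
    unfolding product_state_def by (simp add: prod_power_distrib flip: prod_norm)
  also have "\<dots> = (\<Prod>j<n. (cmod (pauli_eigvec (\<kappa> ! j) (x ! axis_coord j (\<kappa> ! j)) True))\<^sup>2
      + (cmod (pauli_eigvec (\<kappa> ! j) (x ! axis_coord j (\<kappa> ! j)) False))\<^sup>2)"
    by (rule sum_prod_cube)
  also have "\<dots> = (\<Prod>j<n. (1::real))"
    using sum_norm_sq_pauli_eigvec[OF axis_choices_nth[OF assms]] by (intro prod.cong) auto
  finally show ?thesis by simp
qed

lemma op_norm_bdd_above:
  "bdd_above {sqrt (\<Sum>y\<in>cube n. (cmod (\<Sum>x\<in>cube n. A y x * v x))\<^sup>2) | v.
      (\<Sum>x\<in>cube n. (cmod (v x))\<^sup>2) = 1}"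
proof (rule bdd_aboveI, safe)
  fix v :: "bool list \<Rightarrow> complex" assume v: "(\<Sum>x\<in>cube n. (cmod (v x))\<^sup>2) = 1"
  have "cmod (v x) \<le> 1" if "x \<in> cube n" for x
    using member_le_sum[of x "cube n" "\<lambda>x. (cmod (v x))\<^sup>2"] v that by (simp add: power_le_one_iff)
  then have "cmod (\<Sum>x\<in>cube n. A y x * v x) \<le> (\<Sum>x\<in>cube n. cmod (A y x))" for y
    using norm_sum[of "\<lambda>x. A y x * v x" "cube n"]
    by (simp add: norm_mult) (smt (verit) mult_left_le norm_ge_zero sum_mono)
  then show "sqrt (\<Sum>y\<in>cube n. (cmod (\<Sum>x\<in>cube n. A y x * v x))\<^sup>2)
      \<le> sqrt (\<Sum>y\<in>cube n. (\<Sum>x\<in>cube n. cmod (A y x))\<^sup>2)"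
    by (intro real_sqrt_le_mono sum_mono power_mono) auto
qed

lemma norm_quadratic_form_le_op_norm:
  assumes "(\<Sum>r\<in>cube n. (cmod (\<psi> r))\<^sup>2) = 1"
  shows "cmod (\<Sum>r\<in>cube n. \<Sum>q\<in>cube n. cnj (\<psi> r) * A r q * \<psi> q) \<le> op_norm n A"
proof -
  define A\<psi> where "A\<psi> r = (\<Sum>q\<in>cube n. A r q * \<psi> q)" for r
  have "cmod (\<Sum>r\<in>cube n. \<Sum>q\<in>cube n. cnj (\<psi> r) * A r q * \<psi> q) = cmod (\<Sum>r\<in>cube n. cnj (\<psi> r) * A\<psi> r)"
    unfolding A\<psi>_def by (simp add: sum_distrib_left mult.assoc)
  also have "\<dots> \<le> (\<Sum>r\<in>cube n. cmod (\<psi> r) * cmod (A\<psi> r))"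
    using norm_sum[of "\<lambda>r. cnj (\<psi> r) * A\<psi> r" "cube n"] by (simp add: norm_mult)
  also have "\<dots> \<le> L2_set (\<lambda>r. cmod (\<psi> r)) (cube n) * L2_set (\<lambda>r. cmod (A\<psi> r)) (cube n)"
    using L2_set_mult_ineq[of "\<lambda>r. cmod (\<psi> r)" "\<lambda>r. cmod (A\<psi> r)" "cube n"] by simp
  also have "\<dots> = sqrt (\<Sum>y\<in>cube n. (cmod (\<Sum>x\<in>cube n. A y x * \<psi> x))\<^sup>2)"
    unfolding L2_set_def assms A\<psi>_def by simp
  also have "\<dots> \<le> op_norm n A"
    unfolding op_norm_def by (rule cSup_upper[OF _ op_norm_bdd_above]) (use assms in blast)
  finally show ?thesis .
qed

lemma sum_product_state_forms:
  assumes "\<forall>r\<in>cube n. \<forall>q\<in>cube n. A r q = (\<Sum>s\<in>pwords n. c s * pauli_tensor s r q)"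
  shows "(\<Sum>\<kappa>\<in>axis_choices n. \<Sum>r\<in>cube n. \<Sum>q\<in>cube n. cnj (product_state x n \<kappa> r) * A r q * product_state x n \<kappa> q)
       = 3 ^ n * fourier_sum (classical_coeffs n c) (3 * n) x"
proof -
  let ?\<psi> = "product_state x n"
  let ?E = "\<lambda>s \<kappa>. \<Sum>r\<in>cube n. \<Sum>q\<in>cube n. cnj (?\<psi> \<kappa> r) * pauli_tensor s r q * ?\<psi> \<kappa> q"
  have "(\<Sum>r\<in>cube n. \<Sum>q\<in>cube n. cnj (?\<psi> \<kappa> r) * A r q * ?\<psi> \<kappa> q)
      = (\<Sum>r\<in>cube n. \<Sum>q\<in>cube n. \<Sum>s\<in>pwords n. c s * (cnj (?\<psi> \<kappa> r) * pauli_tensor s r q * ?\<psi> \<kappa> q))"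
    for \<kappa> using assms by (intro sum.cong refl) (simp add: sum_distrib_left sum_distrib_right mult_ac)
  also have "\<dots> \<kappa> = (\<Sum>r\<in>cube n. \<Sum>s\<in>pwords n. \<Sum>q\<in>cube n.
      c s * (cnj (?\<psi> \<kappa> r) * pauli_tensor s r q * ?\<psi> \<kappa> q))" for \<kappa>
    by (intro sum.cong refl) (rule sum.swap)
  also have "\<dots> \<kappa> = (\<Sum>s\<in>pwords n. c s * ?E s \<kappa>)" for \<kappa>
    by (subst sum.swap) (simp add: sum_distrib_left)
  finally have "(\<Sum>\<kappa>\<in>axis_choices n. \<Sum>r\<in>cube n. \<Sum>q\<in>cube n. cnj (?\<psi> \<kappa> r) * A r q * ?\<psi> \<kappa> q)
      = (\<Sum>s\<in>pwords n. c s * (\<Sum>\<kappa>\<in>axis_choices n. ?E s \<kappa>))"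
    by (simp add: sum_distrib_left sum.swap[of _ "pwords n"])
  also have "\<dots> = (\<Sum>s\<in>pwords n. c s * (3 ^ n * (\<Prod>j<n. axis_average x s j)))"
    by (intro sum.cong refl)
      (simp add: product_state_expectation sum_axis_choices_expectation cong: sum.cong)
  also have "\<dots> = 3 ^ n * fourier_sum (classical_coeffs n c) (3 * n) x"
    unfolding fourier_sum_classical_coeffs by (simp add: sum_distrib_left mult_ac)
  finally show ?thesis .
qed

text \<open>\<open>3\<^sup>n f(x)\<close> is a sum of \<open>3\<^sup>n\<close> quadratic forms of \<open>A\<close> at unit vectors.\<close>
lemma sup_norm_classical_coeffs_le_op_norm:
  assumes "\<forall>r\<in>cube n. \<forall>q\<in>cube n. A r q = (\<Sum>s\<in>pwords n. c s * pauli_tensor s r q)"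
  shows "sup_norm (classical_coeffs n c) (3 * n) \<le> op_norm n A"
proof (rule sup_norm_le)
  fix x :: "bool list"
  have "3 ^ n * cmod (fourier_sum (classical_coeffs n c) (3 * n) x)
      = cmod (\<Sum>\<kappa>\<in>axis_choices n. \<Sum>r\<in>cube n. \<Sum>q\<in>cube n.
          cnj (product_state x n \<kappa> r) * A r q * product_state x n \<kappa> q)"
    by (simp add: sum_product_state_forms[OF assms] norm_mult norm_power)
  also have "\<dots> \<le> (\<Sum>\<kappa>\<in>axis_choices n. op_norm n A)"
    by (intro order_trans[OF norm_sum] sum_mono norm_quadratic_form_le_op_norm sum_norm_sq_product_state)
  also have "\<dots> = 3 ^ n * op_norm n A" by (simp add: card_axis_choices)
  finally show "cmod (fourier_sum (classical_coeffs n c) (3 * n) x) \<le> op_norm n A" by simp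
qed

lemma sum_powr_pauli_coeffs_le:
  assumes "p > 0"
  shows "(\<Sum>s\<in>{s\<in>pwords n. pweight s \<le> d}. cmod (c s) powr p)
       \<le> (3 ^ d) powr p * (\<Sum>T | T \<subseteq> {0..<3 * n} \<and> card T \<le> d. cmod (classical_coeffs n c T) powr p)"
proof -
  define X where "X = {s\<in>pwords n. pweight s \<le> d}"
  have "(\<Sum>s\<in>X. cmod (c s) powr p) \<le> (\<Sum>s\<in>X. (3 ^ d) powr p * cmod (classical_coeffs n c (pauli_embed s)) powr p)"
  proof (intro sum_mono)
    fix s assume "s \<in> X"
    then have s: "s \<in> pwords n" "pweight s \<le> d" by (auto simp: X_def)
    have "cmod (c s) = 3 ^ pweight s * cmod (classical_coeffs n c (pauli_embed s))"
      by (simp add: classical_coeffs_pauli_embed[OF s(1)] norm_divide norm_power)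
    also have "\<dots> \<le> 3 ^ d * cmod (classical_coeffs n c (pauli_embed s))"
      using s(2) by (intro mult_right_mono power_increasing) auto
    finally show "cmod (c s) powr p \<le> (3 ^ d) powr p * cmod (classical_coeffs n c (pauli_embed s)) powr p"
      using assms by (simp add: powr_mono2 flip: powr_mult)
  qed
  also have "\<dots> = (3 ^ d) powr p * (\<Sum>T\<in>pauli_embed ` X. cmod (classical_coeffs n c T) powr p)"
  proof -
    have "inj_on pauli_embed X" by (rule inj_on_subset[OF inj_on_pauli_embed[of n]]) (auto simp: X_def)
    then show ?thesis by (simp add: sum.reindex sum_distrib_left)
  qed
  also have "\<dots> \<le> (3 ^ d) powr p * (\<Sum>T | T \<subseteq> {0..<3 * n} \<and> card T \<le> d. cmod (classical_coeffs n c T) powr p)"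
  proof (intro mult_left_mono sum_mono2)
    show "finite {T. T \<subseteq> {0..<3 * n} \<and> card T \<le> d}"
      by (rule finite_subset[of _ "Pow {0..<3 * n}"]) auto
    show "pauli_embed ` X \<subseteq> {T. T \<subseteq> {0..<3 * n} \<and> card T \<le> d}"
      using pauli_embed_subset card_pauli_embed by (auto simp: X_def)
  qed auto
  finally show ?thesis by (simp add: X_def)
qed

theorem pauli_bohnenblust_hille:
  assumes "d \<ge> 1" "B \<in> BH_consts d" "n \<ge> 1"
    and "\<forall>s\<in>pwords n. pweight s > d \<longrightarrow> c s = 0"
    and "\<forall>r\<in>cube n. \<forall>q\<in>cube n. A r q = (\<Sum>s\<in>pwords n. c s * pauli_tensor s r q)"
  shows "(\<Sum>s\<in>{s\<in>pwords n. pweight s \<le> d}. cmod (c s) powr (2 * real d / (real d + 1)))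
           powr ((real d + 1) / (2 * real d))
       \<le> 3 ^ d * B * op_norm n A"
proof -
  define p where "p = 2 * real d / (real d + 1)"
  have p: "p > 0" "(real d + 1) / (2 * real d) = 1 / p" using assms(1) by (auto simp: p_def)
  define Y where "Y = (\<Sum>T | T \<subseteq> {0..<3 * n} \<and> card T \<le> d. cmod (classical_coeffs n c T) powr p)"
  have "Y \<ge> 0" by (simp add: Y_def sum_nonneg)
  have "Y powr (1 / p) \<le> B * sup_norm (classical_coeffs n c) (3 * n)"
    using BH_constsD[OF assms(2), of "3 * n" "classical_coeffs n c"] assms(3) classical_coeffs_eq_0[OF assms(4)]
    by (simp add: Y_def p_def sup_norm_eq_Max)
  also have "\<dots> \<le> B * op_norm n A"
    using BH_consts_ge_1[OF assms(2)] sup_norm_classical_coeffs_le_op_norm[OF assms(5)]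
    by (intro mult_left_mono) auto
  finally have Y: "Y powr (1 / p) \<le> B * op_norm n A" .
  have "(\<Sum>s\<in>{s\<in>pwords n. pweight s \<le> d}. cmod (c s) powr p) powr (1 / p) \<le> ((3 ^ d) powr p * Y) powr (1 / p)"
    using sum_powr_pauli_coeffs_le[OF p(1)] p by (intro powr_mono2) (auto simp: Y_def sum_nonneg)
  also have "\<dots> = 3 ^ d * Y powr (1 / p)"
    using p \<open>Y \<ge> 0\<close> by (simp add: powr_mult powr_powr)
  also have "\<dots> \<le> 3 ^ d * (B * op_norm n A)"
    using Y by simp
  finally show ?thesis by (simp add: p mult.assoc p_def[symmetric])
qed

theorem theorem1p2:
  fixes d :: nat
  assumes "d \<ge> 1"
  shows "\<exists>C > 0.
    (\<forall>(n::nat) (A :: bool list \<Rightarrow> bool list \<Rightarrow> complex) (c :: nat list \<Rightarrow> complex).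
       n \<ge> 1 \<longrightarrow>
       (\<forall>s\<in>pwords n. pweight s > d \<longrightarrow> c s = 0) \<longrightarrow>
       (\<forall>r\<in>cube n. \<forall>q\<in>cube n. A r q = (\<Sum>s\<in>pwords n. c s * pauli_tensor s r q)) \<longrightarrow>
       (\<Sum>s\<in>{s\<in>pwords n. pweight s \<le> d}. cmod (c s) powr (2 * real d / (real d + 1)))
          powr ((real d + 1) / (2 * real d))
       \<le> C * op_norm n A)
    \<and> C \<le> 3 ^ d * BH d"
proof -
  have BH: "BH d \<in> BH_consts d" by (rule BH_in_BH_consts[OF assms])
  then have "BH d \<ge> 1" by (rule BH_consts_ge_1)
  then show ?thesis
    using pauli_bohnenblust_hille[OF assms BH] by (intro exI[of _ "3 ^ d * BH d"]) auto
qed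

end
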